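(* Under model $\mathcal M_{\mathrm s}$, the process $\{V_{1,t}\}_{t\ge0}$, where $V_{1,t}=\mathbb P(\tau_1<t\mid X_{1,1},\dots,X_{1,t})$, is a time-homogeneous Markov chain on $[0,1]$, and its transition kernel $K(\cdot,\cdot)$ is stochastically monotone: for $0\le x\le x'\le1$ (in the state space), $K(x,\cdot)\le_{st}K(x',\cdot)$.
   Context: There are $K\ge1$ data streams; stream $k$ has observations $X_{k,t}$, $t=1,2,\dots$, and change point $\tau_k$. Model $\mathcal M_{\mathrm s}$: $\tau_1,\dots,\tau_K$ are i.i.d. with $\mathbb P(\tau_k=m)=\theta(1-\theta)^m$, $m=0,1,2,\dots$, $\theta\in(0,1)$; conditionally on $(\tau_1,\dots,\tau_K)$, the $X_{k,t}$ are independent over $k,t$ with density $p$ if $t\le\tau_k$ and $q$ if $t>\tau_k$ (with respect to a baseline measure; $p,q$ positive on a common support). For real random variables (or distributions) $A\le_{st}B$ means $\mathbb P(A\ge x)\le\mathbb P(B\ge x)$ for all real $x$. *)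

theory Defs
  imports "HOL-Probability.Probability"
begin

definition stoch_le :: "real measure \<Rightarrow> real measure \<Rightarrow> bool" where
  "stoch_le A B \<longleftrightarrow> (\<forall>x::real. measure A {x..} \<le> measure B {x..})"

definition obs_sigma :: "'a measure \<Rightarrow> 'b measure \<Rightarrow> (nat \<Rightarrow> 'a \<Rightarrow> 'b) \<Rightarrow> nat \<Rightarrow> 'a measure" where
  "obs_sigma M N Y t = sigma (space M) {Y s -` A \<inter> space M | s A. s \<in> {1..t} \<and> A \<in> sets N}"

definition posterior :: "'a measure \<Rightarrow> 'b measure \<Rightarrow> ('a \<Rightarrow> nat) \<Rightarrow> (nat \<Rightarrow> 'a \<Rightarrow> 'b) \<Rightarrow> nat \<Rightarrow> 'a \<Rightarrow> real" where
  "posterior M N tau Y t = real_cond_exp M (obs_sigma M N Y t) (\<lambda>\<omega>. if tau \<omega> < t then 1 else 0)"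

definition proc_sigma :: "'a measure \<Rightarrow> (nat \<Rightarrow> 'a \<Rightarrow> real) \<Rightarrow> nat \<Rightarrow> 'a measure" where
  "proc_sigma M V t = sigma (space M) {V s -` B \<inter> space M | s B. s \<le> t \<and> B \<in> sets borel}"

end

theory Submission
  imports Defs
begin

text \<open>Marginalising the other streams reduces the model to a single stream with geometric change
  time \<open>T\<close>. Its posterior weights \<open>P(T = m | X\<^sub>1, \<dots>, X\<^sub>t)\<close> are explicit likelihood ratios, and by
  induction on \<open>t\<close> they are versions of the conditional probabilities. Averaging over them shows
  that, given the past, \<open>X\<^sub>t\<^sub>+\<^sub>1\<close> has density \<open>w q + (1 - w) p\<close> with \<open>w = V\<^sub>t + \<theta> (1 - V\<^sub>t)\<close>,
  while Bayes' rule gives \<open>V\<^sub>t\<^sub>+\<^sub>1 = w q(X\<^sub>t\<^sub>+\<^sub>1) / (w q(X\<^sub>t\<^sub>+\<^sub>1) + (1 - w) p(X\<^sub>t\<^sub>+\<^sub>1))\<close>. Hence the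
  conditional law of \<open>V\<^sub>t\<^sub>+\<^sub>1\<close> given the past depends on \<open>V\<^sub>t\<close> alone.

  For monotonicity, a larger \<open>V\<^sub>t\<close> means a larger \<open>w\<close>; the update is increasing in \<open>w\<close>, and its
  superlevel sets are likelihood-ratio sets, which by the Neyman--Pearson argument carry at least
  as much \<open>q\<close>-mass as \<open>p\<close>-mass, so moving weight from \<open>p\<close> to \<open>q\<close> can only increase
  \<open>P(V\<^sub>t\<^sub>+\<^sub>1 \<ge> c)\<close>.\<close>

lemma emeasure_density_space:
  assumes [measurable]: "f \<in> borel_measurable N"
  shows "emeasure (density N f) (space N) = (\<integral>\<^sup>+y. f y \<partial>N)"
proof -
  have "emeasure (density N f) (space N) = (\<integral>\<^sup>+y. f y * indicator (space N) y \<partial>N)"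
    by (rule emeasure_density) simp_all
  also have "\<dots> = (\<integral>\<^sup>+y. f y \<partial>N)" by (rule nn_integral_cong) simp
  finally show ?thesis .
qed

lemma borel_measurable_nn_integral_weighted:
  assumes H: "H \<in> borel_measurable (F \<Otimes>\<^sub>M N)" and g[measurable]: "g \<in> borel_measurable N"
    and fin: "(\<integral>\<^sup>+y. ennreal (g y) \<partial>N) \<noteq> \<infinity>"
  shows "(\<lambda>\<omega>. \<integral>\<^sup>+y. ennreal (g y) * H (\<omega>, y) \<partial>N) \<in> borel_measurable F"
proof -
  define D where "D = density N (\<lambda>y. ennreal (g y))"
  have sD: "sets D = sets N" "space D = space N" unfolding D_def by simp_all
  interpret D: finite_measure D
    using fin by (intro finite_measureI) (simp add: D_def emeasure_density_space)
  have "(\<lambda>\<omega>. \<integral>\<^sup>+y. H (\<omega>, y) \<partial>D) \<in> borel_measurable F"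
    by (intro D.borel_measurable_nn_integral_fst)
      (unfold measurable_cong_sets[OF sets_pair_measure_cong[OF refl sD(1)] refl], rule H)
  moreover have "(\<integral>\<^sup>+y. H (\<omega>, y) \<partial>D) = (\<integral>\<^sup>+y. ennreal (g y) * H (\<omega>, y) \<partial>N)"
    if "\<omega> \<in> space F" for \<omega>
    unfolding D_def using measurable_Pair2[OF H that] by (simp add: nn_integral_density)
  ultimately show ?thesis by (rule measurable_cong[THEN iffD1, rotated])
qed

lemma subalgebra_density: "subalgebra M F \<Longrightarrow> subalgebra (density M f) F"
  by (simp add: subalgebra_def)

lemma emeasure_restr_to_subalg_density:
  assumes sub: "subalgebra M F" and [measurable]: "f \<in> borel_measurable M" and C: "C \<in> sets F"
  shows "emeasure (restr_to_subalg (density M f) F) C = (\<integral>\<^sup>+\<omega>. f \<omega> * indicator C \<omega> \<partial>M)"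
proof -
  have [measurable]: "C \<in> sets M" using sub C by (auto simp: subalgebra_def)
  show ?thesis
    unfolding emeasure_restr_to_subalg[OF subalgebra_density[OF sub] C]
    by (rule emeasure_density) simp_all
qed

lemma nn_integral_indicator_Int:
  "A \<in> sets M \<Longrightarrow> B \<in> sets M \<Longrightarrow> (\<integral>\<^sup>+\<omega>. indicator A \<omega> * indicator B \<omega> \<partial>M) = emeasure M (A \<inter> B)"
  by (simp add: indicator_inter_arith[symmetric])

lemma restr_to_subalg_density_eqI:
  assumes sub: "subalgebra M F" and gen: "sets F = sigma_sets (space M) E"
    and E: "Int_stable E" "E \<subseteq> Pow (space M)" "space M \<in> E"
    and [measurable]: "f \<in> borel_measurable M" "g \<in> borel_measurable M"
    and fin: "(\<integral>\<^sup>+\<omega>. f \<omega> \<partial>M) \<noteq> \<infinity>"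
    and eq: "\<And>C. C \<in> E \<Longrightarrow> (\<integral>\<^sup>+\<omega>. f \<omega> * indicator C \<omega> \<partial>M) = (\<integral>\<^sup>+\<omega>. g \<omega> * indicator C \<omega> \<partial>M)"
  shows "restr_to_subalg (density M f) F = restr_to_subalg (density M g) F"
proof -
  have E_sets: "C \<in> E \<Longrightarrow> C \<in> sets F" for C using gen by auto
  note emeasure_restr = emeasure_restr_to_subalg_density[OF sub _ E_sets]
  have "emeasure (restr_to_subalg (density M f) F) (space M) = (\<integral>\<^sup>+\<omega>. f \<omega> * indicator (space M) \<omega> \<partial>M)"
    by (rule emeasure_restr) (simp_all add: E(3))
  also have "\<dots> = (\<integral>\<^sup>+\<omega>. f \<omega> \<partial>M)" by (rule nn_integral_cong) simp
  finally have fin_restr: "emeasure (restr_to_subalg (density M f) F) (space M) \<noteq> \<infinity>"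
    using fin by simp
  show ?thesis
  proof (rule measure_eqI_generator_eq[OF E(1,2), where A="\<lambda>_. space M"])
    show "sets (restr_to_subalg (density M f) F) = sigma_sets (space M) E"
      "sets (restr_to_subalg (density M g) F) = sigma_sets (space M) E"
      using gen by (simp_all add: sets_restr_to_subalg[OF subalgebra_density[OF sub]])
    show "emeasure (restr_to_subalg (density M f) F) (space M) \<noteq> \<infinity>" for i :: nat
      by (fact fin_restr)
    show "emeasure (restr_to_subalg (density M f) F) C = emeasure (restr_to_subalg (density M g) F) C"
      if "C \<in> E" for C
      using that by (simp add: emeasure_restr eq)
  qed (use E(3) in auto)
qed

lemma nn_integral_eq_if_restr_density_eq:
  assumes sub: "subalgebra M F"
    and eq: "restr_to_subalg (density M f) F = restr_to_subalg (density M g) F"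
    and [measurable]: "f \<in> borel_measurable M" "g \<in> borel_measurable M" "\<phi> \<in> borel_measurable F"
  shows "(\<integral>\<^sup>+\<omega>. f \<omega> * \<phi> \<omega> \<partial>M) = (\<integral>\<^sup>+\<omega>. g \<omega> * \<phi> \<omega> \<partial>M)"
proof -
  have \<phi>M[measurable]: "\<phi> \<in> borel_measurable M"
    using sub by (rule measurable_from_subalg) simp
  have "(\<integral>\<^sup>+\<omega>. h \<omega> * \<phi> \<omega> \<partial>M) = (\<integral>\<^sup>+\<omega>. \<phi> \<omega> \<partial>restr_to_subalg (density M h) F)"
    if [measurable]: "h \<in> borel_measurable M" for h
    by (simp add: nn_integral_subalgebra2[OF subalgebra_density[OF sub]] nn_integral_density)
  then show ?thesis using eq by simp
qed

lemma real_cond_exp_charact_nonneg: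
  assumes "sigma_finite_subalgebra M F"
    and [measurable]: "f \<in> borel_measurable M" "g \<in> borel_measurable F"
    and "integrable M f" "integrable M g" "\<And>\<omega>. 0 \<le> f \<omega>" "\<And>\<omega>. 0 \<le> g \<omega>"
    and eq: "\<And>A. A \<in> sets F \<Longrightarrow>
      (\<integral>\<^sup>+\<omega>. ennreal (indicator A \<omega> * f \<omega>) \<partial>M) = (\<integral>\<^sup>+\<omega>. ennreal (indicator A \<omega> * g \<omega>) \<partial>M)"
  shows "AE \<omega> in M. real_cond_exp M F f \<omega> = g \<omega>"
proof -
  interpret sigma_finite_subalgebra M F by fact
  have gM[measurable]: "g \<in> borel_measurable M" by (rule measurable_from_subalg[OF subalg]) simp
  show ?thesis
  proof (rule real_cond_exp_charact)
    fix A assume A: "A \<in> sets F"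
    then have [measurable]: "A \<in> sets M" using subalg by (auto simp: subalgebra_def)
    have set_integral_eq: "(\<integral>\<omega>\<in>A. h \<omega> \<partial>M) = enn2real (\<integral>\<^sup>+\<omega>. ennreal (indicator A \<omega> * h \<omega>) \<partial>M)"
      if [measurable]: "h \<in> borel_measurable M" and "\<And>\<omega>. 0 \<le> h \<omega>" for h
      unfolding set_lebesgue_integral_def using that(2)
      by (subst integral_eq_nn_integral) auto
    show "(\<integral>\<omega>\<in>A. f \<omega> \<partial>M) = (\<integral>\<omega>\<in>A. g \<omega> \<partial>M)"
      unfolding set_integral_eq[OF assms(2,6)] set_integral_eq[OF gM assms(7)] eq[OF A] ..
  qed (simp_all add: assms(4,5))
qed

subsection \<open>The Neyman--Pearson inequality\<close>

lemma measure_density_scaled_le: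
  fixes f g :: "'b \<Rightarrow> real"
  assumes [measurable]: "f \<in> borel_measurable N" "g \<in> borel_measurable N" "S \<in> sets N"
    and "finite_measure (density N f)" "finite_measure (density N g)" "0 \<le> a" "0 \<le> b"
    and le: "\<And>y. y \<in> S \<Longrightarrow> a * f y \<le> b * g y"
  shows "a * measure (density N f) S \<le> b * measure (density N g) S"
proof -
  have "ennreal a * emeasure (density N f) S = (\<integral>\<^sup>+y. ennreal (a * f y) * indicator S y \<partial>N)"
    using \<open>0 \<le> a\<close> by (simp add: emeasure_density nn_integral_cmult[symmetric] ennreal_mult' mult.assoc)
  also have "\<dots> \<le> (\<integral>\<^sup>+y. ennreal (b * g y) * indicator S y \<partial>N)"
    using le by (intro nn_integral_mono) (auto simp: indicator_def intro!: ennreal_leI)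
  also have "\<dots> = ennreal b * emeasure (density N g) S"
    using \<open>0 \<le> b\<close> by (simp add: emeasure_density nn_integral_cmult[symmetric] ennreal_mult' mult.assoc)
  finally have "ennreal (a * measure (density N f) S) \<le> ennreal (b * measure (density N g) S)"
    using assms(4,5,6,7)
    by (simp add: finite_measure.emeasure_eq_measure ennreal_mult' measure_nonneg)
  then show ?thesis using assms(7) by (simp add: ennreal_le_iff measure_nonneg)
qed

lemma likelihood_ratio_set_measure_le:
  fixes p q :: "'b \<Rightarrow> real"
  assumes [measurable]: "p \<in> borel_measurable N" "q \<in> borel_measurable N" "S \<in> sets N"
    and P: "prob_space (density N p)" and Q: "prob_space (density N q)"
    and "0 < a" "0 \<le> b"
    and in_S: "\<And>y. y \<in> S \<Longrightarrow> a * p y \<le> b * q y"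
    and off_S: "\<And>y. y \<in> space N - S \<Longrightarrow> b * q y \<le> a * p y"
  shows "measure (density N p) S \<le> measure (density N q) S"
proof -
  interpret P: prob_space "density N p" by (fact P)
  interpret Q: prob_space "density N q" by (fact Q)
  have in_S_le: "a * P.prob S \<le> b * Q.prob S"
    using in_S \<open>0 < a\<close> \<open>0 \<le> b\<close>
    by (intro measure_density_scaled_le) (auto intro: P.finite_measure_axioms Q.finite_measure_axioms)
  have "b * Q.prob (space N - S) \<le> a * P.prob (space N - S)"
    using off_S \<open>0 < a\<close> \<open>0 \<le> b\<close>
    by (intro measure_density_scaled_le) (auto intro: P.finite_measure_axioms Q.finite_measure_axioms)
  then have off_S_le: "b * (1 - Q.prob S) \<le> a * (1 - P.prob S)"
    using P.prob_compl[of S] Q.prob_compl[of S] by simp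
  show ?thesis
  proof (cases "a \<le> b")
    case True
    then have "a * (1 - Q.prob S) \<le> b * (1 - Q.prob S)"
      by (intro mult_right_mono) simp_all
    with off_S_le have "a * (1 - Q.prob S) \<le> a * (1 - P.prob S)" by linarith
    then show ?thesis using \<open>0 < a\<close> by (simp add: mult_le_cancel_left_pos)
  next
    case False
    then have "b * Q.prob S \<le> a * Q.prob S"
      by (intro mult_right_mono) simp_all
    with in_S_le have "a * P.prob S \<le> a * Q.prob S" by linarith
    then show ?thesis using \<open>0 < a\<close> by (simp add: mult_le_cancel_left_pos)
  qed
qed

subsection \<open>Marginal law of one stream\<close>

lemma suminf_geometric_prob_ennreal:
  assumes "0 < \<theta>" "\<theta> < 1"
  shows "(\<Sum>i. ennreal (\<theta> * (1 - \<theta>) ^ i)) = 1"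
proof -
  have "(\<lambda>i. \<theta> * (1 - \<theta>) ^ i) sums (\<theta> * (1 / (1 - (1 - \<theta>))))"
    using assms by (intro sums_mult geometric_sums) auto
  then have "(\<lambda>i. \<theta> * (1 - \<theta>) ^ i) sums 1" using assms by simp
  then have "(\<Sum>i. ennreal (\<theta> * (1 - \<theta>) ^ i)) = ennreal 1"
    using assms by (intro suminf_ennreal_eq) auto
  then show ?thesis by simp
qed

definition change_dens :: "('b \<Rightarrow> real) \<Rightarrow> ('b \<Rightarrow> real) \<Rightarrow> nat \<Rightarrow> nat \<Rightarrow> 'b \<Rightarrow> real" where
  "change_dens p q m s y = (if s \<le> m then p y else q y)"

locale change_streams =
  fixes M :: "'a measure" and N :: "'b measure" and K :: nat and \<theta> :: real
    and p q :: "'b \<Rightarrow> real" and tau :: "nat \<Rightarrow> 'a \<Rightarrow> nat" and X :: "nat \<Rightarrow> nat \<Rightarrow> 'a \<Rightarrow> 'b"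
  assumes theta: "0 < \<theta>" "\<theta> < 1"
    and p_measurable[measurable]: "p \<in> borel_measurable N"
    and q_measurable[measurable]: "q \<in> borel_measurable N"
    and p_integral: "(\<integral>\<^sup>+ y. ennreal (p y) \<partial>N) = 1"
    and q_integral: "(\<integral>\<^sup>+ y. ennreal (q y) \<partial>N) = 1"
    and tau_measurable[measurable]: "\<And>k. tau k \<in> measurable M (count_space UNIV)"
    and X_measurable[measurable]: "\<And>k t. X k t \<in> measurable M N"
    and joint_law: "\<And>n m A. (\<And>k t. A k t \<in> sets N) \<Longrightarrow>
      emeasure M {\<omega> \<in> space M. (\<forall>k\<in>{1..K}. tau k \<omega> = m k) \<and>
                                (\<forall>k\<in>{1..K}. \<forall>t\<in>{1..n}. X k t \<omega> \<in> A k t)}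
      = (\<Prod>k\<in>{1..K}. ennreal (\<theta> * (1 - \<theta>) ^ m k)) *
        (\<Prod>k\<in>{1..K}. \<Prod>t\<in>{1..n}. \<integral>\<^sup>+ y \<in> A k t. ennreal (if t \<le> m k then p y else q y) \<partial>N)"
begin

definition streams_event :: "nat set \<Rightarrow> nat \<Rightarrow> (nat \<Rightarrow> nat) \<Rightarrow> (nat \<Rightarrow> nat \<Rightarrow> 'b set) \<Rightarrow> 'a set" where
  "streams_event S n m A =
    {\<omega> \<in> space M. (\<forall>k\<in>S. tau k \<omega> = m k) \<and> (\<forall>k\<in>S. \<forall>t\<in>{1..n}. X k t \<omega> \<in> A k t)}"

lemma streams_event_sets:
  assumes "finite S" and [measurable]: "\<And>k t. A k t \<in> sets N"
  shows "streams_event S n m A \<in> sets M"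
  unfolding streams_event_def using \<open>finite S\<close> by measurable

lemma change_dens_integral_space: "(\<integral>\<^sup>+ y\<in>space N. ennreal (change_dens p q m s y) \<partial>N) = 1"
proof -
  have "(\<integral>\<^sup>+ y\<in>space N. ennreal (change_dens p q m s y) \<partial>N) = (\<integral>\<^sup>+ y. ennreal (change_dens p q m s y) \<partial>N)"
    by (rule nn_integral_cong) simp
  then show ?thesis using p_integral q_integral by (cases "s \<le> m") (simp_all add: change_dens_def)
qed

text \<open>Streams are removed one at a time: leaving stream \<open>j\<close> unconstrained and summing over
  its change time contributes the factor \<open>\<Sum>i. \<theta> * (1 - \<theta>) ^ i = 1\<close>.\<close>

lemma emeasure_streams_event:
  assumes "S \<subseteq> {1..K}" "\<And>k t. A k t \<in> sets N"
  shows "emeasure M (streams_event S n m A) = (\<Prod>k\<in>S. ennreal (\<theta> * (1 - \<theta>) ^ m k)) *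
    (\<Prod>k\<in>S. \<Prod>t\<in>{1..n}. \<integral>\<^sup>+ y \<in> A k t. ennreal (change_dens p q (m k) t y) \<partial>N)"
  using assms
proof (induction "card ({1..K} - S)" arbitrary: S m A)
  case 0
  then have "S = {1..K}" by auto
  then show ?case using joint_law[OF 0(3), of m n] by (simp add: streams_event_def change_dens_def)
next
  case (Suc d)
  then obtain j where j: "j \<in> {1..K}" "j \<notin> S"
    by (metis Diff_iff card.empty ex_in_conv nat.distinct(1))
  have fin_S: "finite S" using Suc(3) finite_subset by blast
  define S' where "S' = insert j S"
  define A' where "A' = A(j := (\<lambda>_. space N))"
  have A': "\<And>k t. A' k t \<in> sets N" using Suc(4) by (simp add: A'_def)
  have S': "d = card ({1..K} - S')" "S' \<subseteq> {1..K}"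
    using Suc(2,3) j unfolding S'_def
    by (metis Diff_insert card_Diff_singleton diff_Suc_1 DiffI) (use Suc(3) j in auto)
  define c where "c = (\<Prod>k\<in>S. ennreal (\<theta> * (1 - \<theta>) ^ m k)) *
    (\<Prod>k\<in>S. \<Prod>t\<in>{1..n}. \<integral>\<^sup>+ y \<in> A k t. ennreal (change_dens p q (m k) t y) \<partial>N)"
  have extend: "emeasure M (streams_event S' n (m(j:=i)) A') = c * ennreal (\<theta> * (1 - \<theta>) ^ i)" for i
  proof -
    have "(\<Prod>k\<in>S. ennreal (\<theta> * (1 - \<theta>) ^ (m(j:=i)) k)) = (\<Prod>k\<in>S. ennreal (\<theta> * (1 - \<theta>) ^ m k))"
      "(\<Prod>k\<in>S. \<Prod>t\<in>{1..n}. \<integral>\<^sup>+ y \<in> A' k t. ennreal (change_dens p q ((m(j:=i)) k) t y) \<partial>N) =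
       (\<Prod>k\<in>S. \<Prod>t\<in>{1..n}. \<integral>\<^sup>+ y \<in> A k t. ennreal (change_dens p q (m k) t y) \<partial>N)"
      using j by (auto intro!: prod.cong simp: A'_def)
    then show ?thesis
      unfolding Suc.hyps(1)[OF S' A'] using j fin_S change_dens_integral_space
      by (simp add: S'_def A'_def c_def ac_simps)
  qed
  have "streams_event S n m A = (\<Union>i. streams_event S' n (m(j:=i)) A')"
    using j measurable_space[OF X_measurable] unfolding streams_event_def S'_def A'_def by auto
  moreover have "disjoint_family (\<lambda>i. streams_event S' n (m(j:=i)) A')"
    unfolding disjoint_family_on_def streams_event_def S'_def by auto
  ultimately have "emeasure M (streams_event S n m A) = (\<Sum>i. emeasure M (streams_event S' n (m(j:=i)) A'))"
    using S' A' by (auto intro!: suminf_emeasure[symmetric] streams_event_sets finite_subset[of S'])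
  also have "\<dots> = c"
    by (simp add: extend ennreal_suminf_cmult suminf_geometric_prob_ennreal theta)
  finally show ?case unfolding c_def .
qed

lemma emeasure_stream_marginal:
  assumes "k \<in> {1..K}" "\<And>s. A s \<in> sets N"
  shows "emeasure M {\<omega> \<in> space M. tau k \<omega> = m \<and> (\<forall>s\<in>{1..n}. X k s \<omega> \<in> A s)} =
    ennreal (\<theta> * (1 - \<theta>) ^ m) * (\<Prod>s\<in>{1..n}. \<integral>\<^sup>+ y \<in> A s. ennreal (change_dens p q m s y) \<partial>N)"
  using emeasure_streams_event[of "{k}" "\<lambda>_. A" n "\<lambda>_. m"] assms
  by (simp add: streams_event_def)

end

locale change_stream = prob_space M for M :: "'a measure" +
  fixes N :: "'b measure" and \<theta> :: real and p q :: "'b \<Rightarrow> real"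
    and T :: "'a \<Rightarrow> nat" and X :: "nat \<Rightarrow> 'a \<Rightarrow> 'b"
  assumes theta: "0 < \<theta>" "\<theta> < 1"
    and p_measurable[measurable]: "p \<in> borel_measurable N"
    and q_measurable[measurable]: "q \<in> borel_measurable N"
    and p_nonneg: "\<And>y. 0 \<le> p y" and q_nonneg: "\<And>y. 0 \<le> q y"
    and p_integral: "(\<integral>\<^sup>+ y. ennreal (p y) \<partial>N) = 1"
    and q_integral: "(\<integral>\<^sup>+ y. ennreal (q y) \<partial>N) = 1"
    and same_support: "\<And>y. 0 < p y \<longleftrightarrow> 0 < q y"
    and T_measurable[measurable]: "T \<in> measurable M (count_space UNIV)"
    and X_measurable[measurable]: "\<And>s. X s \<in> measurable M N"
    and joint_law: "\<And>n m A. (\<And>s. A s \<in> sets N) \<Longrightarrow>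
      emeasure M {\<omega> \<in> space M. T \<omega> = m \<and> (\<forall>s\<in>{1..n}. X s \<omega> \<in> A s)} =
      ennreal (\<theta> * (1 - \<theta>) ^ m) *
      (\<Prod>s\<in>{1..n}. \<integral>\<^sup>+ y \<in> A s. ennreal (change_dens p q m s y) \<partial>N)"
begin

lemma change_dens_nonneg: "0 \<le> change_dens p q m s y"
  using p_nonneg q_nonneg by (simp add: change_dens_def)

lemma change_dens_measurable[measurable]: "change_dens p q m s \<in> borel_measurable N"
  unfolding change_dens_def by measurable

lemma change_dens_integral: "(\<integral>\<^sup>+ y. ennreal (change_dens p q m s y) \<partial>N) = 1"
  using p_integral q_integral by (cases "s \<le> m") (simp_all add: change_dens_def)

lemma prob_space_density_change_dens: "prob_space (density N (change_dens p q m s))"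
  by (rule prob_spaceI) (simp add: emeasure_density_space change_dens_integral)

definition obs :: "nat \<Rightarrow> 'a measure" where
  "obs t = obs_sigma M N X t"

definition obs_gen :: "nat \<Rightarrow> 'a set set" where
  "obs_gen t = {X s -` A \<inter> space M | s A. s \<in> {1..t} \<and> A \<in> sets N}"

definition obs_cyl :: "nat \<Rightarrow> 'a set set" where
  "obs_cyl t = (\<lambda>A. {\<omega> \<in> space M. \<forall>s\<in>{1..t}. X s \<omega> \<in> A s}) ` {A. \<forall>s. A s \<in> sets N}"

definition obs_rect :: "nat \<Rightarrow> 'a set set" where
  "obs_rect t = (\<lambda>(C, A). C \<inter> (X (Suc t) -` A \<inter> space M)) ` (sets (obs t) \<times> sets N)"

lemma obs_gen_Pow: "obs_gen t \<subseteq> Pow (space M)"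
  unfolding obs_gen_def by auto

lemma space_obs[simp]: "space (obs t) = space M"
  unfolding obs_def obs_sigma_def obs_gen_def[symmetric] by (simp add: space_measure_of_conv)

lemma sets_obs: "sets (obs t) = sigma_sets (space M) (obs_gen t)"
  unfolding obs_def obs_sigma_def obs_gen_def[symmetric] using obs_gen_Pow by (simp add: sets_measure_of)

lemma sets_obs_subset: "sets (obs t) \<subseteq> sets M"
  unfolding sets_obs by (rule sets.sigma_sets_subset) (auto simp: obs_gen_def)

lemma subalgebra_obs: "subalgebra M (obs t)"
  unfolding subalgebra_def using sets_obs_subset by simp

lemma sigma_finite_subalgebra_obs: "sigma_finite_subalgebra M (obs t)"
  by (rule finite_measure_subalgebra_is_sigma_finite)
    (simp add: finite_measure_subalgebra_def finite_measure_subalgebra_axioms_def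
      subalgebra_obs finite_measure_axioms)

lemma measurable_from_obs: "f \<in> measurable (obs t) L \<Longrightarrow> f \<in> measurable M L"
  by (rule measurable_from_subalg[OF subalgebra_obs])

lemma X_space: "\<omega> \<in> space M \<Longrightarrow> X s \<omega> \<in> space N"
  using measurable_space[OF X_measurable] by blast

lemma X_measurable_obs: "s \<in> {1..t} \<Longrightarrow> X s \<in> measurable (obs t) N"
  by (rule measurableI) (auto simp: X_space sets_obs obs_gen_def)

lemma sets_obs_mono: "t \<le> t' \<Longrightarrow> sets (obs t) \<subseteq> sets (obs t')"
  unfolding sets_obs by (intro sigma_sets_subseteq) (force simp: obs_gen_def)

lemma measurable_obs_pair_next: "(\<lambda>\<omega>. (\<omega>, X (Suc t) \<omega>)) \<in> measurable M (obs t \<Otimes>\<^sub>M N)"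
  by (rule measurable_Pair[OF measurable_from_subalg[OF subalgebra_obs measurable_ident_sets[OF refl]]
    X_measurable])

lemma obs_cylI: "(\<And>s. A s \<in> sets N) \<Longrightarrow> {\<omega> \<in> space M. \<forall>s\<in>{1..t}. X s \<omega> \<in> A s} \<in> obs_cyl t"
  unfolding obs_cyl_def by (rule image_eqI[OF refl]) simp

lemma obs_cylE:
  assumes "C \<in> obs_cyl t"
  obtains A where "\<forall>s. A s \<in> sets N" "C = {\<omega> \<in> space M. \<forall>s\<in>{1..t}. X s \<omega> \<in> A s}"
  using assms unfolding obs_cyl_def by blast

lemma obs_cyl_generator:
  "Int_stable (obs_cyl t)" "obs_cyl t \<subseteq> Pow (space M)" "space M \<in> obs_cyl t"
proof -
  show "Int_stable (obs_cyl t)"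
  proof (rule Int_stableI)
    fix C D assume C: "C \<in> obs_cyl t" and D: "D \<in> obs_cyl t"
    obtain A where "\<forall>s. A s \<in> sets N" "C = {\<omega> \<in> space M. \<forall>s\<in>{1..t}. X s \<omega> \<in> A s}"
      using C by (rule obs_cylE)
    moreover obtain B where "\<forall>s. B s \<in> sets N" "D = {\<omega> \<in> space M. \<forall>s\<in>{1..t}. X s \<omega> \<in> B s}"
      using D by (rule obs_cylE)
    ultimately have "C \<inter> D = {\<omega> \<in> space M. \<forall>s\<in>{1..t}. X s \<omega> \<in> A s \<inter> B s}"
      and "\<And>s. A s \<inter> B s \<in> sets N" by auto
    then show "C \<inter> D \<in> obs_cyl t" by (simp only: obs_cylI)
  qed
  show "obs_cyl t \<subseteq> Pow (space M)" unfolding obs_cyl_def by auto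
  have "space M = {\<omega> \<in> space M. \<forall>s\<in>{1..t}. X s \<omega> \<in> space N}" by (auto simp: X_space)
  also have "\<dots> \<in> obs_cyl t" by (rule obs_cylI) simp
  finally show "space M \<in> obs_cyl t" .
qed

lemma sets_obs_eq_cyl: "sets (obs t) = sigma_sets (space M) (obs_cyl t)"
  unfolding sets_obs
proof (rule sigma_sets_eqI)
  interpret S: sigma_algebra "space M" "sigma_sets (space M) (obs_gen t)"
    using obs_gen_Pow by (rule sigma_algebra_sigma_sets)
  fix C assume "C \<in> obs_cyl t"
  then obtain A where A: "\<forall>s. A s \<in> sets N" and C: "C = {\<omega> \<in> space M. \<forall>s\<in>{1..t}. X s \<omega> \<in> A s}"
    by (rule obs_cylE)
  show "C \<in> sigma_sets (space M) (obs_gen t)"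
  proof (cases "t = 0")
    case True
    then show ?thesis using C S.top by simp
  next
    case False
    have "X s -` A s \<inter> space M \<in> obs_gen t" if "s \<in> {1..t}" for s
      unfolding obs_gen_def using that A by blast
    then have "(\<Inter>s\<in>{1..t}. X s -` A s \<inter> space M) \<in> sigma_sets (space M) (obs_gen t)"
      using False by (intro S.finite_INT sigma_sets.Basic) auto
    moreover have "C = (\<Inter>s\<in>{1..t}. X s -` A s \<inter> space M)" using False unfolding C by auto
    ultimately show ?thesis by simp
  qed
next
  fix C assume "C \<in> obs_gen t"
  then obtain s A where s: "s \<in> {1..t}" "A \<in> sets N" "C = X s -` A \<inter> space M"
    unfolding obs_gen_def by blast
  then have "C = {\<omega> \<in> space M. \<forall>r\<in>{1..t}. X r \<omega> \<in> (if r = s then A else space N)}"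
    using X_space by auto
  also have "\<dots> \<in> obs_cyl t" using s(2) by (intro obs_cylI) simp
  finally show "C \<in> sigma_sets (space M) (obs_cyl t)" by (rule sigma_sets.Basic)
qed

lemma obs_rectI: "C \<in> sets (obs t) \<Longrightarrow> A \<in> sets N \<Longrightarrow> C \<inter> (X (Suc t) -` A \<inter> space M) \<in> obs_rect t"
  unfolding obs_rect_def by (rule image_eqI[where x="(C, A)"]) auto

lemma obs_rectE:
  assumes "R \<in> obs_rect t"
  obtains C A where "C \<in> sets (obs t)" "A \<in> sets N" "R = C \<inter> (X (Suc t) -` A \<inter> space M)"
proof -
  from assms obtain C A where "(C, A) \<in> sets (obs t) \<times> sets N" "R = C \<inter> (X (Suc t) -` A \<inter> space M)"
    unfolding obs_rect_def by blast
  then show ?thesis by (intro that) auto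
qed

lemma obs_rect_generator:
  "Int_stable (obs_rect t)" "obs_rect t \<subseteq> Pow (space M)" "space M \<in> obs_rect t"
proof -
  show "Int_stable (obs_rect t)"
  proof (rule Int_stableI)
    fix R R' assume R: "R \<in> obs_rect t" and R': "R' \<in> obs_rect t"
    obtain C A where CA: "C \<in> sets (obs t)" "A \<in> sets N" "R = C \<inter> (X (Suc t) -` A \<inter> space M)"
      using R by (rule obs_rectE)
    obtain C' A' where CA': "C' \<in> sets (obs t)" "A' \<in> sets N" "R' = C' \<inter> (X (Suc t) -` A' \<inter> space M)"
      using R' by (rule obs_rectE)
    have "R \<inter> R' = (C \<inter> C') \<inter> (X (Suc t) -` (A \<inter> A') \<inter> space M)" using CA(3) CA'(3) by auto
    with CA CA' show "R \<inter> R' \<in> obs_rect t" by (simp only:) (intro obs_rectI sets.Int)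
  qed
  show "obs_rect t \<subseteq> Pow (space M)" unfolding obs_rect_def by auto
  have "space M = space (obs t) \<inter> (X (Suc t) -` space N \<inter> space M)" by (auto simp: X_space)
  also have "\<dots> \<in> obs_rect t" by (intro obs_rectI sets.top)
  finally show "space M \<in> obs_rect t" .
qed

lemma sets_obs_Suc_eq_rect: "sets (obs (Suc t)) = sigma_sets (space M) (obs_rect t)"
proof (unfold sets_obs[of "Suc t"], rule sigma_sets_eqI)
  fix C assume "C \<in> obs_gen (Suc t)"
  then obtain s A where s: "s \<in> {1..Suc t}" "A \<in> sets N" "C = X s -` A \<inter> space M"
    unfolding obs_gen_def by blast
  have "C \<in> obs_rect t"
  proof (cases "s = Suc t")
    case True
    then have "C = space (obs t) \<inter> (X (Suc t) -` A \<inter> space M)" using s by auto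
    also have "\<dots> \<in> obs_rect t" using s(2) by (intro obs_rectI sets.top)
    finally show ?thesis .
  next
    case False
    then have "s \<in> {1..t}" using s by auto
    then have "C \<in> obs_gen t" unfolding obs_gen_def using s(2,3) by blast
    then have "C \<in> sets (obs t)" by (simp add: sets_obs)
    moreover have "C = C \<inter> (X (Suc t) -` space N \<inter> space M)" using s(3) X_space by auto
    ultimately show ?thesis by (metis obs_rectI sets.top)
  qed
  then show "C \<in> sigma_sets (space M) (obs_rect t)" by (rule sigma_sets.Basic)
next
  interpret S: sigma_algebra "space M" "sigma_sets (space M) (obs_gen (Suc t))"
    using obs_gen_Pow by (rule sigma_algebra_sigma_sets)
  fix R assume "R \<in> obs_rect t"
  then obtain C A where CA: "C \<in> sets (obs t)" "A \<in> sets N" "R = C \<inter> (X (Suc t) -` A \<inter> space M)"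
    by (rule obs_rectE)
  have "C \<in> sigma_sets (space M) (obs_gen (Suc t))"
    using sets_obs_mono[of t "Suc t"] CA(1) unfolding sets_obs[of "Suc t"] by auto
  moreover have "X (Suc t) -` A \<inter> space M \<in> obs_gen (Suc t)"
    unfolding obs_gen_def using CA(2) by force
  ultimately show "R \<in> sigma_sets (space M) (obs_gen (Suc t))"
    unfolding CA(3) by (blast intro: S.Int sigma_sets.Basic)
qed

lemma emeasure_T_next_obs_cyl:
  assumes B: "\<forall>s. B s \<in> sets N" and A: "A \<in> sets N"
  shows "emeasure M {\<omega> \<in> space M. T \<omega> = m \<and> (\<forall>s\<in>{1..t}. X s \<omega> \<in> B s) \<and> X (Suc t) \<omega> \<in> A} =
    emeasure M {\<omega> \<in> space M. T \<omega> = m \<and> (\<forall>s\<in>{1..t}. X s \<omega> \<in> B s)} *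
    emeasure (density N (change_dens p q m (Suc t))) A"
proof -
  define B' where "B' = B(Suc t := A)"
  have B': "\<And>s. B' s \<in> sets N" using A B by (simp add: B'_def)
  have "{\<omega> \<in> space M. T \<omega> = m \<and> (\<forall>s\<in>{1..t}. X s \<omega> \<in> B s) \<and> X (Suc t) \<omega> \<in> A} =
    {\<omega> \<in> space M. T \<omega> = m \<and> (\<forall>s\<in>{1..Suc t}. X s \<omega> \<in> B' s)}"
    unfolding B'_def by (auto simp: le_Suc_eq) (metis atLeastAtMost_iff le_refl Suc_le_mono le0)
  also have "emeasure M \<dots> = ennreal (\<theta> * (1 - \<theta>) ^ m) *
    (\<Prod>s\<in>{1..Suc t}. \<integral>\<^sup>+ y \<in> B' s. ennreal (change_dens p q m s y) \<partial>N)"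
    by (rule joint_law[OF B'])
  also have "\<dots> = ennreal (\<theta> * (1 - \<theta>) ^ m) *
    (\<Prod>s\<in>{1..t}. \<integral>\<^sup>+ y \<in> B s. ennreal (change_dens p q m s y) \<partial>N) *
    emeasure (density N (change_dens p q m (Suc t))) A"
    using A by (simp add: B'_def emeasure_density atLeastAtMostSuc_conv mult_ac)
  also have "\<dots> = emeasure M {\<omega> \<in> space M. T \<omega> = m \<and> (\<forall>s\<in>{1..t}. X s \<omega> \<in> B s)} *
    emeasure (density N (change_dens p q m (Suc t))) A"
    using joint_law[where A=B and n=t and m=m] B by simp
  finally show ?thesis .
qed

lemma emeasure_T_next_obs:
  assumes C: "C \<in> sets (obs t)" and A[measurable]: "A \<in> sets N"
  shows "emeasure M {\<omega> \<in> C. X (Suc t) \<omega> \<in> A \<and> T \<omega> = m} =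
    emeasure M {\<omega> \<in> C. T \<omega> = m} * emeasure (density N (change_dens p q m (Suc t))) A"
proof -
  define d where "d = emeasure (density N (change_dens p q m (Suc t))) A"
  define Z where "Z = {\<omega> \<in> space M. T \<omega> = m}"
  define Z' where "Z' = {\<omega> \<in> space M. X (Suc t) \<omega> \<in> A \<and> T \<omega> = m}"
  have [measurable]: "Z \<in> sets M" "Z' \<in> sets M" unfolding Z_def Z'_def by measurable
  have "restr_to_subalg (density M (indicator Z')) (obs t) =
    restr_to_subalg (density M (\<lambda>\<omega>. d * indicator Z \<omega>)) (obs t)"
  proof (rule restr_to_subalg_density_eqI[OF subalgebra_obs sets_obs_eq_cyl obs_cyl_generator])
    fix C assume C_cyl: "C \<in> obs_cyl t"
    then have "C \<in> sets M" using sets_obs_subset unfolding sets_obs_eq_cyl by blast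
    obtain B where B: "\<forall>s. B s \<in> sets N" and C: "C = {\<omega> \<in> space M. \<forall>s\<in>{1..t}. X s \<omega> \<in> B s}"
      using C_cyl by (rule obs_cylE)
    have "Z' \<inter> C = {\<omega> \<in> space M. T \<omega> = m \<and> (\<forall>s\<in>{1..t}. X s \<omega> \<in> B s) \<and> X (Suc t) \<omega> \<in> A}"
      "Z \<inter> C = {\<omega> \<in> space M. T \<omega> = m \<and> (\<forall>s\<in>{1..t}. X s \<omega> \<in> B s)}"
      unfolding Z_def Z'_def C by auto
    then have "emeasure M (Z' \<inter> C) = d * emeasure M (Z \<inter> C)"
      using emeasure_T_next_obs_cyl[OF B A] by (simp add: d_def mult.commute)
    then show "(\<integral>\<^sup>+\<omega>. indicator Z' \<omega> * indicator C \<omega> \<partial>M) = (\<integral>\<^sup>+\<omega>. d * indicator Z \<omega> * indicator C \<omega> \<partial>M)"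
      using \<open>C \<in> sets M\<close> by (simp add: nn_integral_indicator_Int nn_integral_cmult mult.assoc)
  qed (simp_all add: emeasure_eq_measure)
  then have "(\<integral>\<^sup>+\<omega>. indicator Z' \<omega> * indicator C \<omega> \<partial>M) = (\<integral>\<^sup>+\<omega>. d * indicator Z \<omega> * indicator C \<omega> \<partial>M)"
    by (rule nn_integral_eq_if_restr_density_eq[OF subalgebra_obs _ _ _ borel_measurable_indicator[OF C]])
      simp_all
  moreover have "C \<in> sets M" using C sets_obs_subset by blast
  ultimately have "emeasure M (Z' \<inter> C) = d * emeasure M (Z \<inter> C)"
    by (simp add: nn_integral_indicator_Int nn_integral_cmult mult.assoc)
  moreover have "Z' \<inter> C = {\<omega> \<in> C. X (Suc t) \<omega> \<in> A \<and> T \<omega> = m}" "Z \<inter> C = {\<omega> \<in> C. T \<omega> = m}"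
    using \<open>C \<in> sets M\<close> sets.sets_into_space by (auto simp: Z_def Z'_def)
  ultimately show ?thesis by (simp add: d_def mult.commute)
qed

lemma emeasure_restr_T:
  assumes "C \<in> sets (obs t)"
  shows "emeasure (restr_to_subalg (density M (indicator {\<omega> \<in> space M. T \<omega> = m})) (obs t)) C =
    emeasure M {\<omega> \<in> C. T \<omega> = m}"
proof -
  have C: "C \<in> sets M" using assms sets_obs_subset by blast
  have "emeasure (restr_to_subalg (density M (indicator {\<omega> \<in> space M. T \<omega> = m})) (obs t)) C =
    (\<integral>\<^sup>+\<omega>. indicator {\<omega> \<in> space M. T \<omega> = m} \<omega> * indicator C \<omega> \<partial>M)"
    by (rule emeasure_restr_to_subalg_density[OF subalgebra_obs _ assms]) simp
  also have "\<dots> = emeasure M ({\<omega> \<in> space M. T \<omega> = m} \<inter> C)"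
    using C by (intro nn_integral_indicator_Int) simp_all
  also have "{\<omega> \<in> space M. T \<omega> = m} \<inter> C = {\<omega> \<in> C. T \<omega> = m}"
    using sets.sets_into_space[OF C] by auto
  finally show ?thesis .
qed

lemma finite_measure_restr_T:
  "finite_measure (restr_to_subalg (density M (indicator {\<omega> \<in> space M. T \<omega> = m})) (obs t))"
  by (rule finite_measureI)
    (simp add: space_restr_to_subalg emeasure_restr_T[OF sets.top[of "obs t", simplified]]
      emeasure_eq_measure)

lemma distr_obs_next_given_T:
  "distr (density M (indicator {\<omega> \<in> space M. T \<omega> = m})) (obs t \<Otimes>\<^sub>M N) (\<lambda>\<omega>. (\<omega>, X (Suc t) \<omega>)) =
   restr_to_subalg (density M (indicator {\<omega> \<in> space M. T \<omega> = m})) (obs t) \<Otimes>\<^sub>M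
   density N (change_dens p q m (Suc t))"
  (is "?L = ?\<nu> \<Otimes>\<^sub>M ?D")
proof (rule pair_measure_eqI[symmetric])
  interpret \<nu>: finite_measure ?\<nu> by (rule finite_measure_restr_T)
  interpret D: prob_space ?D by (rule prob_space_density_change_dens)
  show "sigma_finite_measure ?\<nu>" "sigma_finite_measure ?D" by unfold_locales
  show "sets (?\<nu> \<Otimes>\<^sub>M ?D) = sets ?L"
    by (simp add: sets_pair_measure_cong[OF sets_restr_to_subalg[OF subalgebra_density[OF subalgebra_obs]]])
  fix C B assume "C \<in> sets ?\<nu>" "B \<in> sets ?D"
  then have C: "C \<in> sets (obs t)" and B[measurable]: "B \<in> sets N"
    by (simp_all add: sets_restr_to_subalg[OF subalgebra_density[OF subalgebra_obs]])
  then have [measurable]: "C \<in> sets M" using sets_obs_subset by blast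
  have pair_measurable: "(\<lambda>\<omega>. (\<omega>, X (Suc t) \<omega>)) \<in> measurable (density M (indicator {\<omega> \<in> space M. T \<omega> = m})) (obs t \<Otimes>\<^sub>M N)"
    using measurable_obs_pair_next by simp
  have "(\<lambda>\<omega>. (\<omega>, X (Suc t) \<omega>)) -` (C \<times> B) \<inter> space M = {\<omega> \<in> C. X (Suc t) \<omega> \<in> B}"
    using sets.sets_into_space[of C M] by auto
  then have "emeasure ?L (C \<times> B) = emeasure M ({\<omega> \<in> space M. T \<omega> = m} \<inter> {\<omega> \<in> C. X (Suc t) \<omega> \<in> B})"
    using C by (simp add: emeasure_distr[OF pair_measurable] emeasure_density nn_integral_indicator_Int)
  also have "{\<omega> \<in> space M. T \<omega> = m} \<inter> {\<omega> \<in> C. X (Suc t) \<omega> \<in> B} = {\<omega> \<in> C. X (Suc t) \<omega> \<in> B \<and> T \<omega> = m}"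
    using sets.sets_into_space[of C M] by auto
  also have "emeasure M \<dots> = emeasure M {\<omega> \<in> C. T \<omega> = m} * emeasure ?D B"
    by (rule emeasure_T_next_obs[OF C B])
  also have "emeasure M {\<omega> \<in> C. T \<omega> = m} = emeasure ?\<nu> C"
    by (rule emeasure_restr_T[OF C, symmetric])
  finally show "emeasure ?\<nu> C * emeasure ?D B = emeasure ?L (C \<times> B)" ..
qed

lemma nn_integral_T_next_obs:
  assumes H[measurable]: "H \<in> borel_measurable (obs t \<Otimes>\<^sub>M N)"
  shows "(\<integral>\<^sup>+\<omega>. indicator {\<omega> \<in> space M. T \<omega> = m} \<omega> * H (\<omega>, X (Suc t) \<omega>) \<partial>M) =
    (\<integral>\<^sup>+\<omega>. indicator {\<omega> \<in> space M. T \<omega> = m} \<omega> *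
      (\<integral>\<^sup>+y. ennreal (change_dens p q m (Suc t) y) * H (\<omega>, y) \<partial>N) \<partial>M)"
proof -
  let ?Z = "{\<omega> \<in> space M. T \<omega> = m}"
  let ?\<nu> = "restr_to_subalg (density M (indicator ?Z)) (obs t)"
  let ?D = "density N (change_dens p q m (Suc t))"
  interpret D: prob_space ?D by (rule prob_space_density_change_dens)
  have sets_\<nu>: "sets ?\<nu> = sets (obs t)"
    by (rule sets_restr_to_subalg[OF subalgebra_density[OF subalgebra_obs]])
  have H_\<nu>D: "H \<in> borel_measurable (?\<nu> \<Otimes>\<^sub>M ?D)"
    using H by (simp add: measurable_cong_sets[OF sets_pair_measure_cong[OF sets_\<nu> sets_density] refl])
  have inner: "(\<integral>\<^sup>+y. H (\<omega>, y) \<partial>?D) = (\<integral>\<^sup>+y. ennreal (change_dens p q m (Suc t) y) * H (\<omega>, y) \<partial>N)"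
    if "\<omega> \<in> space M" for \<omega>
    using measurable_Pair2[OF H, of \<omega>] that by (simp add: nn_integral_density)
  have inner_measurable: "(\<lambda>\<omega>. \<integral>\<^sup>+y. ennreal (change_dens p q m (Suc t) y) * H (\<omega>, y) \<partial>N) \<in> borel_measurable (obs t)"
    by (rule borel_measurable_nn_integral_weighted[OF H change_dens_measurable])
      (simp add: change_dens_integral)
  have "(\<integral>\<^sup>+\<omega>. indicator ?Z \<omega> * H (\<omega>, X (Suc t) \<omega>) \<partial>M) =
    (\<integral>\<^sup>+z. H z \<partial>distr (density M (indicator ?Z)) (obs t \<Otimes>\<^sub>M N) (\<lambda>\<omega>. (\<omega>, X (Suc t) \<omega>)))"
    using measurable_comp[OF measurable_obs_pair_next H]
    by (simp add: nn_integral_distr measurable_obs_pair_next nn_integral_density comp_def)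
  also have "\<dots> = (\<integral>\<^sup>+\<omega>. \<integral>\<^sup>+y. H (\<omega>, y) \<partial>?D \<partial>?\<nu>)"
    unfolding distr_obs_next_given_T by (rule D.nn_integral_fst[OF H_\<nu>D, symmetric])
  also have "\<dots> = (\<integral>\<^sup>+\<omega>. \<integral>\<^sup>+y. ennreal (change_dens p q m (Suc t) y) * H (\<omega>, y) \<partial>N \<partial>?\<nu>)"
    by (intro nn_integral_cong) (simp add: space_restr_to_subalg inner)
  also have "\<dots> = (\<integral>\<^sup>+\<omega>. indicator ?Z \<omega> *
      (\<integral>\<^sup>+y. ennreal (change_dens p q m (Suc t) y) * H (\<omega>, y) \<partial>N) \<partial>M)"
    using measurable_from_obs[OF inner_measurable]
    by (simp add: nn_integral_subalgebra2[OF subalgebra_density[OF subalgebra_obs] inner_measurable]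
      nn_integral_density)
  finally show ?thesis .
qed

subsection \<open>Posterior weights\<close>

definition lik :: "nat \<Rightarrow> nat \<Rightarrow> 'a \<Rightarrow> real" where
  "lik t m \<omega> = \<theta> * (1 - \<theta>) ^ m * (\<Prod>s\<in>{1..t}. change_dens p q m s (X s \<omega>))"

text \<open>\<open>lik_unchanged t \<omega>\<close> is the closed form of \<open>\<Sum>m\<ge>t. lik t m \<omega>\<close>.\<close>

definition lik_unchanged :: "nat \<Rightarrow> 'a \<Rightarrow> real" where
  "lik_unchanged t \<omega> = (1 - \<theta>) ^ t * (\<Prod>s\<in>{1..t}. p (X s \<omega>))"

definition lik_changed :: "nat \<Rightarrow> 'a \<Rightarrow> real" where
  "lik_changed t \<omega> = (\<Sum>m<t. lik t m \<omega>)"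

definition lik_total :: "nat \<Rightarrow> 'a \<Rightarrow> real" where
  "lik_total t \<omega> = lik_changed t \<omega> + lik_unchanged t \<omega>"

definition post :: "nat \<Rightarrow> nat \<Rightarrow> 'a \<Rightarrow> real" where
  "post t m \<omega> = lik t m \<omega> / lik_total t \<omega>"

definition post_changed :: "nat \<Rightarrow> 'a \<Rightarrow> real" where
  "post_changed t \<omega> = lik_changed t \<omega> / lik_total t \<omega>"

lemma lik_nonneg: "0 \<le> lik t m \<omega>"
  unfolding lik_def using theta change_dens_nonneg by (intro mult_nonneg_nonneg prod_nonneg) auto

lemma lik_unchanged_nonneg: "0 \<le> lik_unchanged t \<omega>"
  unfolding lik_unchanged_def using theta p_nonneg by (intro mult_nonneg_nonneg prod_nonneg) auto

lemma lik_changed_nonneg: "0 \<le> lik_changed t \<omega>"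
  unfolding lik_changed_def using lik_nonneg by (intro sum_nonneg) auto

lemma lik_total_nonneg: "0 \<le> lik_total t \<omega>"
  unfolding lik_total_def using lik_changed_nonneg lik_unchanged_nonneg by (rule add_nonneg_nonneg)

lemma post_nonneg: "0 \<le> post t m \<omega>"
  unfolding post_def using lik_nonneg lik_total_nonneg by (rule divide_nonneg_nonneg)

lemma post_changed_bounds: "0 \<le> post_changed t \<omega>" "post_changed t \<omega> \<le> 1"
  unfolding post_changed_def lik_total_def using lik_changed_nonneg[of t \<omega>] lik_unchanged_nonneg[of t \<omega>]
  by (auto simp: divide_le_eq_1)

lemma post_changed_eq_sum: "post_changed t \<omega> = (\<Sum>m<t. post t m \<omega>)"
  unfolding post_changed_def post_def lik_changed_def by (simp add: sum_divide_distrib)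

lemma lik_unchanged_eq:
  assumes "t \<le> m"
  shows "lik t m \<omega> = \<theta> * (1 - \<theta>) ^ (m - t) * lik_unchanged t \<omega>"
proof -
  have "(\<Prod>s\<in>{1..t}. change_dens p q m s (X s \<omega>)) = (\<Prod>s\<in>{1..t}. p (X s \<omega>))"
    using assms by (intro prod.cong) (auto simp: change_dens_def)
  moreover have "(1 - \<theta>) ^ m = (1 - \<theta>) ^ (m - t) * (1 - \<theta>) ^ t"
    using assms by (simp add: power_add[symmetric])
  ultimately show ?thesis unfolding lik_def lik_unchanged_def by (simp add: mult_ac)
qed

lemma lik_Suc: "lik (Suc t) m \<omega> = lik t m \<omega> * change_dens p q m (Suc t) (X (Suc t) \<omega>)"
  unfolding lik_def by (simp add: atLeastAtMostSuc_conv mult_ac)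

lemma lik_changed_Suc:
  "lik_changed (Suc t) \<omega> = (lik_changed t \<omega> + \<theta> * lik_unchanged t \<omega>) * q (X (Suc t) \<omega>)"
proof -
  have "lik_changed (Suc t) \<omega> = (\<Sum>m<Suc t. lik t m \<omega>) * q (X (Suc t) \<omega>)"
    unfolding lik_changed_def lik_Suc sum_distrib_right by (intro sum.cong) (auto simp: change_dens_def)
  then show ?thesis using lik_unchanged_eq[of t t \<omega>] by (simp add: lik_changed_def)
qed

lemma lik_unchanged_Suc: "lik_unchanged (Suc t) \<omega> = (1 - \<theta>) * lik_unchanged t \<omega> * p (X (Suc t) \<omega>)"
  unfolding lik_unchanged_def by (simp add: atLeastAtMostSuc_conv mult_ac)

lemma lik_measurable[measurable]: "lik t m \<in> borel_measurable (obs t)"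
  unfolding lik_def by (intro borel_measurable_times borel_measurable_const borel_measurable_prod
    measurable_compose[OF X_measurable_obs change_dens_measurable])

lemma lik_unchanged_measurable[measurable]: "lik_unchanged t \<in> borel_measurable (obs t)"
  unfolding lik_unchanged_def by (intro borel_measurable_times borel_measurable_const borel_measurable_prod
    measurable_compose[OF X_measurable_obs p_measurable])

lemma post_measurable[measurable]: "post t m \<in> borel_measurable (obs t)"
  unfolding post_def[abs_def] lik_total_def lik_changed_def by measurable

lemma post_changed_measurable[measurable]: "post_changed t \<in> borel_measurable (obs t)"
  unfolding post_changed_def[abs_def] lik_total_def lik_changed_def by measurable

subsection \<open>The transition kernel\<close>

text \<open>If the change happened before \<open>t\<close> with probability \<open>z\<close>, it happens before \<open>t + 1\<close> with
  probability \<open>z + \<theta> * (1 - z)\<close>; clamping \<open>z\<close> to \<open>[0, 1]\<close> makes the kernel a probability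
  measure for every real argument.\<close>

definition change_prob_next :: "real \<Rightarrow> real" where
  "change_prob_next z = \<theta> + (1 - \<theta>) * max 0 (min 1 z)"

definition mix_dens :: "real \<Rightarrow> 'b \<Rightarrow> real" where
  "mix_dens w y = w * q y + (1 - w) * p y"

definition bayes_update :: "real \<Rightarrow> 'b \<Rightarrow> real" where
  "bayes_update w y = w * q y / mix_dens w y"

definition trans_kernel :: "real \<Rightarrow> real measure" where
  "trans_kernel z =
    distr (density N (mix_dens (change_prob_next z))) borel (bayes_update (change_prob_next z))"

lemma change_prob_next_bounds: "\<theta> \<le> change_prob_next z" "change_prob_next z \<le> 1"
proof -
  have "0 \<le> (1 - \<theta>) * max 0 (min 1 z)" "(1 - \<theta>) * max 0 (min 1 z) \<le> 1 - \<theta>"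
    using theta by (auto intro: mult_left_le)
  then show "\<theta> \<le> change_prob_next z" "change_prob_next z \<le> 1"
    unfolding change_prob_next_def by linarith+
qed

lemma change_prob_next_mono: "z \<le> z' \<Longrightarrow> change_prob_next z \<le> change_prob_next z'"
  unfolding change_prob_next_def using theta by (auto intro!: mult_left_mono)

lemma change_prob_next_measurable[measurable]: "change_prob_next \<in> borel_measurable borel"
  unfolding change_prob_next_def[abs_def] by measurable

lemma mix_dens_measurable[measurable]:
  assumes [measurable]: "f \<in> borel_measurable L" "g \<in> measurable L N"
  shows "(\<lambda>z. mix_dens (f z) (g z)) \<in> borel_measurable L"
  unfolding mix_dens_def by measurable

lemma bayes_update_measurable[measurable]:
  assumes [measurable]: "f \<in> borel_measurable L" "g \<in> measurable L N"
  shows "(\<lambda>z. bayes_update (f z) (g z)) \<in> borel_measurable L"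
  unfolding bayes_update_def by measurable

lemma mix_dens_nonneg: "0 \<le> w \<Longrightarrow> w \<le> 1 \<Longrightarrow> 0 \<le> mix_dens w y"
  unfolding mix_dens_def using p_nonneg[of y] q_nonneg[of y] by simp

lemma mix_dens_eq_0:
  assumes "0 < w" "w \<le> 1" "mix_dens w y = 0"
  shows "p y = 0" "q y = 0"
proof -
  have "w * q y = 0" using assms p_nonneg[of y] q_nonneg[of y] unfolding mix_dens_def
    by (metis add_nonneg_eq_0_iff diff_ge_0_iff_ge less_imp_le mult_nonneg_nonneg)
  then show "q y = 0" using \<open>0 < w\<close> by simp
  then show "p y = 0" using same_support[of y] p_nonneg[of y] by auto
qed

lemma bayes_update_bounds:
  assumes "0 \<le> w" "w \<le> 1"
  shows "0 \<le> bayes_update w y \<and> bayes_update w y \<le> 1"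
proof -
  have "0 \<le> w * q y" "0 \<le> (1 - w) * p y" using assms p_nonneg[of y] q_nonneg[of y] by simp_all
  then show ?thesis unfolding bayes_update_def mix_dens_def
    by (cases "w * q y + (1 - w) * p y = 0") (auto simp: divide_le_eq_1)
qed

lemma mix_dens_integral:
  assumes "0 \<le> w" "w \<le> 1"
  shows "(\<integral>\<^sup>+ y. ennreal (mix_dens w y) \<partial>N) = 1"
proof -
  have "(\<integral>\<^sup>+ y. ennreal (mix_dens w y) \<partial>N) =
    (\<integral>\<^sup>+ y. ennreal w * ennreal (q y) + ennreal (1 - w) * ennreal (p y) \<partial>N)"
    using assms p_nonneg q_nonneg by (intro nn_integral_cong) (simp add: mix_dens_def ennreal_mult)
  also have "\<dots> = ennreal w + ennreal (1 - w)"
    by (simp add: nn_integral_add nn_integral_cmult p_integral q_integral)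
  also have "\<dots> = 1" using assms by (simp add: ennreal_plus[symmetric])
  finally show ?thesis .
qed

lemma prob_space_density_mix_dens:
  "0 \<le> w \<Longrightarrow> w \<le> 1 \<Longrightarrow> prob_space (density N (mix_dens w))"
  by (rule prob_spaceI) (simp add: emeasure_density_space mix_dens_integral)

lemma prob_space_trans_kernel: "prob_space (trans_kernel z)"
  using change_prob_next_bounds[of z] theta unfolding trans_kernel_def
  by (intro prob_space.prob_space_distr prob_space_density_mix_dens) simp_all

lemma sets_trans_kernel[simp]: "sets (trans_kernel z) = sets borel"
  unfolding trans_kernel_def by simp

lemma emeasure_trans_kernel:
  assumes [measurable]: "B \<in> sets borel"
  shows "emeasure (trans_kernel z) B =
    (\<integral>\<^sup>+y. ennreal (mix_dens (change_prob_next z) y) * indicator B (bayes_update (change_prob_next z) y) \<partial>N)"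
proof -
  let ?w = "change_prob_next z"
  have "emeasure (trans_kernel z) B = emeasure (density N (mix_dens ?w)) (bayes_update ?w -` B \<inter> space N)"
    unfolding trans_kernel_def by (subst emeasure_distr) simp_all
  also have "\<dots> = (\<integral>\<^sup>+y. ennreal (mix_dens ?w y) * indicator (bayes_update ?w -` B \<inter> space N) y \<partial>N)"
    by (rule emeasure_density) simp_all
  also have "\<dots> = (\<integral>\<^sup>+y. ennreal (mix_dens ?w y) * indicator B (bayes_update ?w y) \<partial>N)"
    by (intro nn_integral_cong) (simp add: indicator_def)
  finally show ?thesis .
qed

lemma trans_kernel_unit_interval: "emeasure (trans_kernel z) {0..1} = 1"
proof -
  let ?w = "change_prob_next z"
  have w: "0 \<le> ?w" "?w \<le> 1" using change_prob_next_bounds[of z] theta by simp_all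
  have "emeasure (trans_kernel z) {0..1} = (\<integral>\<^sup>+y. ennreal (mix_dens ?w y) \<partial>N)"
    unfolding emeasure_trans_kernel[OF atLeastAtMost_borel]
    using bayes_update_bounds[OF w] by (intro nn_integral_cong) simp
  then show ?thesis using mix_dens_integral[OF w] by simp
qed

lemma trans_kernel_measurable: "trans_kernel \<in> measurable borel (prob_algebra borel)"
proof (rule measurable_prob_algebraI)
  show "prob_space (trans_kernel z)" for z by (rule prob_space_trans_kernel)
  show "trans_kernel \<in> borel \<rightarrow>\<^sub>M subprob_algebra borel"
  proof (rule measurable_subprob_algebra)
    show "subprob_space (trans_kernel z)" for z
      by (rule prob_space_imp_subprob_space[OF prob_space_trans_kernel])
    fix B :: "real set" assume B[measurable]: "B \<in> sets borel"
    define H :: "real \<times> 'b \<Rightarrow> ennreal"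
      where "H zy = indicator B (bayes_update (change_prob_next (fst zy)) (snd zy))" for zy
    have H[measurable]: "H \<in> borel_measurable (borel \<Otimes>\<^sub>M N)" unfolding H_def by measurable
    have "emeasure (trans_kernel z) B = ennreal (change_prob_next z) * (\<integral>\<^sup>+y. ennreal (q y) * H (z, y) \<partial>N) +
      ennreal (1 - change_prob_next z) * (\<integral>\<^sup>+y. ennreal (p y) * H (z, y) \<partial>N)" for z
    proof -
      have w: "0 \<le> change_prob_next z" "change_prob_next z \<le> 1"
        using change_prob_next_bounds[of z] theta by simp_all
      have "emeasure (trans_kernel z) B = (\<integral>\<^sup>+y. ennreal (change_prob_next z) * (ennreal (q y) * H (z, y)) +
        ennreal (1 - change_prob_next z) * (ennreal (p y) * H (z, y)) \<partial>N)"
        unfolding emeasure_trans_kernel[OF B] H_def using w p_nonneg q_nonneg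
        by (intro nn_integral_cong) (simp add: mix_dens_def ennreal_mult distrib_left distrib_right mult_ac)
      also have "\<dots> = ennreal (change_prob_next z) * (\<integral>\<^sup>+y. ennreal (q y) * H (z, y) \<partial>N) +
        ennreal (1 - change_prob_next z) * (\<integral>\<^sup>+y. ennreal (p y) * H (z, y) \<partial>N)"
        using measurable_Pair2[OF H, of z] by (simp add: nn_integral_add nn_integral_cmult)
      finally show ?thesis .
    qed
    moreover have "(\<lambda>z. \<integral>\<^sup>+y. ennreal (q y) * H (z, y) \<partial>N) \<in> borel_measurable borel"
      "(\<lambda>z. \<integral>\<^sup>+y. ennreal (p y) * H (z, y) \<partial>N) \<in> borel_measurable borel"
      using p_integral q_integral
      by (auto intro: borel_measurable_nn_integral_weighted[OF H])
    ultimately show "(\<lambda>z. emeasure (trans_kernel z) B) \<in> borel_measurable borel"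
      by simp
  qed simp
qed

subsection \<open>The posterior recursion\<close>

lemma change_prob_next_post_changed:
  assumes "0 < lik_total t \<omega>"
  shows "change_prob_next (post_changed t \<omega>) * lik_total t \<omega> = lik_changed t \<omega> + \<theta> * lik_unchanged t \<omega>"
proof -
  have "change_prob_next (post_changed t \<omega>) = \<theta> + (1 - \<theta>) * post_changed t \<omega>"
    using post_changed_bounds[of t \<omega>] by (simp add: change_prob_next_def)
  then show ?thesis
    using assms unfolding post_changed_def lik_total_def by (simp add: field_simps)
qed

lemma lik_total_Suc:
  "lik_total (Suc t) \<omega> = lik_total t \<omega> * mix_dens (change_prob_next (post_changed t \<omega>)) (X (Suc t) \<omega>)"
proof (cases "lik_total t \<omega> = 0")
  case True
  then have "lik_changed t \<omega> = 0" "lik_unchanged t \<omega> = 0"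
    using lik_changed_nonneg[of t \<omega>] lik_unchanged_nonneg[of t \<omega>] unfolding lik_total_def by linarith+
  then show ?thesis using True by (simp add: lik_total_def lik_changed_Suc lik_unchanged_Suc)
next
  case False
  then have pos: "0 < lik_total t \<omega>" using lik_total_nonneg[of t \<omega>] by simp
  have "lik_total t \<omega> * mix_dens (change_prob_next (post_changed t \<omega>)) (X (Suc t) \<omega>) =
    (lik_changed t \<omega> + \<theta> * lik_unchanged t \<omega>) * q (X (Suc t) \<omega>) +
    (lik_total t \<omega> - (lik_changed t \<omega> + \<theta> * lik_unchanged t \<omega>)) * p (X (Suc t) \<omega>)"
    unfolding change_prob_next_post_changed[OF pos, symmetric] mix_dens_def by (simp add: algebra_simps)
  then show ?thesis
    by (simp add: lik_total_def lik_changed_Suc lik_unchanged_Suc algebra_simps)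
qed

lemma post_Suc: "post (Suc t) m \<omega> =
  post t m \<omega> * (change_dens p q m (Suc t) (X (Suc t) \<omega>) /
    mix_dens (change_prob_next (post_changed t \<omega>)) (X (Suc t) \<omega>))"
  unfolding post_def lik_Suc lik_total_Suc by simp

lemma post_changed_Suc:
  assumes "0 < lik_total t \<omega>"
  shows "post_changed (Suc t) \<omega> = bayes_update (change_prob_next (post_changed t \<omega>)) (X (Suc t) \<omega>)"
  unfolding post_changed_def lik_total_Suc lik_changed_Suc bayes_update_def
    change_prob_next_post_changed[OF assms, symmetric]
  using assms by simp

lemma post_change_dens_sums:
  assumes "0 < lik_total t \<omega>"
  shows "(\<lambda>m. post t m \<omega> * change_dens p q m (Suc t) y) sums mix_dens (change_prob_next (post_changed t \<omega>)) y"
proof -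
  let ?w = "change_prob_next (post_changed t \<omega>)"
  have w: "?w * lik_total t \<omega> = lik_changed t \<omega> + \<theta> * lik_unchanged t \<omega>"
    by (rule change_prob_next_post_changed[OF assms])
  have tail: "post t (i + Suc t) \<omega> * change_dens p q (i + Suc t) (Suc t) y =
    \<theta> * (1 - \<theta>) * lik_unchanged t \<omega> / lik_total t \<omega> * p y * (1 - \<theta>) ^ i" for i
  proof -
    have "lik t (i + Suc t) \<omega> = \<theta> * (1 - \<theta>) ^ Suc i * lik_unchanged t \<omega>"
      using lik_unchanged_eq[of t "i + Suc t" \<omega>] by simp
    then have "post t (i + Suc t) \<omega> * change_dens p q (i + Suc t) (Suc t) y =
      \<theta> * (1 - \<theta>) ^ Suc i * lik_unchanged t \<omega> / lik_total t \<omega> * p y"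
      unfolding post_def change_dens_def by simp
    then show ?thesis by (simp add: field_simps)
  qed
  have "(\<lambda>i. \<theta> * (1 - \<theta>) * lik_unchanged t \<omega> / lik_total t \<omega> * p y * (1 - \<theta>) ^ i) sums
    (\<theta> * (1 - \<theta>) * lik_unchanged t \<omega> / lik_total t \<omega> * p y * (1 / (1 - (1 - \<theta>))))"
    using theta by (intro sums_mult geometric_sums) auto
  then have "(\<lambda>i. post t (i + Suc t) \<omega> * change_dens p q (i + Suc t) (Suc t) y) sums
    ((1 - \<theta>) * lik_unchanged t \<omega> / lik_total t \<omega> * p y)"
    unfolding tail using theta by (simp add: mult.assoc)
  then have "(\<lambda>m. post t m \<omega> * change_dens p q m (Suc t) y) sums
    ((1 - \<theta>) * lik_unchanged t \<omega> / lik_total t \<omega> * p y + (\<Sum>m<Suc t. post t m \<omega> * change_dens p q m (Suc t) y))"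
    by (subst sums_iff_shift[symmetric])
  moreover have "(\<Sum>m<Suc t. post t m \<omega> * change_dens p q m (Suc t) y) =
    (\<Sum>m<Suc t. lik t m \<omega> / lik_total t \<omega> * q y)"
    by (intro sum.cong) (auto simp: post_def change_dens_def)
  also have "\<dots> = (\<Sum>m<Suc t. lik t m \<omega>) / lik_total t \<omega> * q y"
    by (simp only: sum_divide_distrib sum_distrib_right)
  also have "\<dots> = ?w * q y"
    using w assms lik_unchanged_eq[of t t \<omega>] by (simp add: lik_changed_def field_simps)
  moreover have "(1 - \<theta>) * lik_unchanged t \<omega> / lik_total t \<omega> = 1 - ?w"
    using w assms by (simp add: lik_total_def field_simps)
  ultimately show ?thesis by (simp add: mix_dens_def add.commute)
qed

lemma ennreal_mix_dens_mult_divide: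
  assumes w: "0 < w" "w \<le> 1" and "0 \<le> r"
  shows "ennreal (mix_dens w y) * ennreal (r * (change_dens p q m s y / mix_dens w y)) =
    ennreal (change_dens p q m s y) * ennreal r"
proof -
  have "mix_dens w y * (r * (change_dens p q m s y / mix_dens w y)) = change_dens p q m s y * r"
    using mix_dens_eq_0[OF w] by (cases "mix_dens w y = 0") (simp_all add: change_dens_def)
  moreover have "0 \<le> r * (change_dens p q m s y / mix_dens w y)"
    using assms mix_dens_nonneg[of w y] change_dens_nonneg by simp
  ultimately show ?thesis
    using assms mix_dens_nonneg[of w y] change_dens_nonneg[of m s y]
    by (simp only: ennreal_mult[symmetric] less_imp_le)
qed

subsection \<open>The posterior weights are the conditional law of the change time\<close>

text \<open>\<open>posterior_law t\<close> says that \<open>post t m\<close> is a version of \<open>P(T = m | obs t)\<close>.\<close>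

definition posterior_law :: "nat \<Rightarrow> bool" where
  "posterior_law t \<longleftrightarrow> (\<forall>m.
    restr_to_subalg (density M (indicator {\<omega> \<in> space M. T \<omega> = m})) (obs t) =
    restr_to_subalg (density M (\<lambda>\<omega>. ennreal (post t m \<omega>))) (obs t))"

lemma post_measurable_M[measurable]: "post t m \<in> borel_measurable M"
  by (rule measurable_from_obs[OF post_measurable])

lemma nn_integral_T_eq_post:
  assumes "posterior_law t" and \<phi>: "\<phi> \<in> borel_measurable (obs t)"
  shows "(\<integral>\<^sup>+\<omega>. indicator {\<omega> \<in> space M. T \<omega> = m} \<omega> * \<phi> \<omega> \<partial>M) = (\<integral>\<^sup>+\<omega>. ennreal (post t m \<omega>) * \<phi> \<omega> \<partial>M)"
proof (rule nn_integral_eq_if_restr_density_eq[OF subalgebra_obs _ _ _ \<phi>])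
  show "restr_to_subalg (density M (indicator {\<omega> \<in> space M. T \<omega> = m})) (obs t) =
    restr_to_subalg (density M (\<lambda>\<omega>. ennreal (post t m \<omega>))) (obs t)"
    using assms(1) unfolding posterior_law_def by blast
  show "(\<lambda>\<omega>. ennreal (post t m \<omega>)) \<in> borel_measurable M"
    using measurable_compose[OF post_measurable_M measurable_ennreal] by (simp add: comp_def)
qed simp

lemma suminf_indicator_T:
  "\<omega> \<in> space M \<Longrightarrow> (\<Sum>m. indicator {\<omega> \<in> space M. T \<omega> = m} \<omega> * f m) = (f (T \<omega>) :: ennreal)"
  by (subst mult.commute, rule suminf_cmult_indicator) (auto simp: disjoint_family_on_def)

lemma AE_lik_total_pos:
  assumes "posterior_law t"
  shows "AE \<omega> in M. 0 < lik_total t \<omega>"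
proof -
  define C where "C = {\<omega> \<in> space M. lik_total t \<omega> = 0}"
  have "C = lik_total t -` {0} \<inter> space (obs t)" by (auto simp: C_def)
  also have "\<dots> \<in> sets (obs t)" unfolding lik_total_def lik_changed_def by measurable
  finally have C_obs: "C \<in> sets (obs t)" .
  then have [measurable]: "C \<in> sets M" using sets_obs_subset by blast
  have "emeasure M C = (\<integral>\<^sup>+\<omega>. (\<Sum>m. indicator {\<omega> \<in> space M. T \<omega> = m} \<omega> * indicator C \<omega>) \<partial>M)"
    unfolding nn_integral_indicator[OF \<open>C \<in> sets M\<close>, symmetric]
    by (rule nn_integral_cong) (rule suminf_indicator_T[symmetric])
  also have "\<dots> = (\<Sum>m. \<integral>\<^sup>+\<omega>. indicator {\<omega> \<in> space M. T \<omega> = m} \<omega> * indicator C \<omega> \<partial>M)"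
    by (rule nn_integral_suminf) simp
  also have "\<dots> = (\<Sum>m. \<integral>\<^sup>+\<omega>. ennreal (post t m \<omega>) * indicator C \<omega> \<partial>M)"
    using C_obs by (intro suminf_cong nn_integral_T_eq_post[OF assms]) simp
  also have "\<dots> = (\<Sum>m::nat. \<integral>\<^sup>+\<omega>. 0 \<partial>M)"
    by (intro suminf_cong nn_integral_cong) (auto simp: C_def post_def indicator_def)
  also have "\<dots> = 0" by simp
  finally have "C \<in> null_sets M" using \<open>C \<in> sets M\<close> by (simp add: null_sets_def)
  then show ?thesis
    by (rule AE_I') (use lik_total_nonneg in \<open>auto simp: C_def less_le\<close>)
qed

lemma suminf_post_nn_integral_change_dens:
  assumes "0 < lik_total t \<omega>" and [measurable]: "h \<in> borel_measurable N"
  shows "(\<Sum>m. ennreal (post t m \<omega>) * (\<integral>\<^sup>+y. ennreal (change_dens p q m (Suc t) y) * h y \<partial>N)) =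
    (\<integral>\<^sup>+y. ennreal (mix_dens (change_prob_next (post_changed t \<omega>)) y) * h y \<partial>N)"
proof -
  have "(\<Sum>m. ennreal (post t m \<omega> * change_dens p q m (Suc t) y)) =
    ennreal (mix_dens (change_prob_next (post_changed t \<omega>)) y)" for y
    by (rule suminf_ennreal_eq[OF _ post_change_dens_sums[OF assms(1)]])
      (intro mult_nonneg_nonneg post_nonneg change_dens_nonneg)
  moreover have "(\<Sum>m. ennreal (post t m \<omega>) * (\<integral>\<^sup>+y. ennreal (change_dens p q m (Suc t) y) * h y \<partial>N)) =
    (\<Sum>m. \<integral>\<^sup>+y. ennreal (post t m \<omega> * change_dens p q m (Suc t) y) * h y \<partial>N)"
    by (intro suminf_cong)
      (simp add: nn_integral_cmult[symmetric] ennreal_mult post_nonneg change_dens_nonneg mult.assoc)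
  ultimately show ?thesis
    by (simp add: nn_integral_suminf[symmetric] ennreal_suminf_multc)
qed

lemma nn_integral_next_obs:
  assumes law: "posterior_law t" and H[measurable]: "H \<in> borel_measurable (obs t \<Otimes>\<^sub>M N)"
  shows "(\<integral>\<^sup>+\<omega>. H (\<omega>, X (Suc t) \<omega>) \<partial>M) =
    (\<integral>\<^sup>+\<omega>. \<integral>\<^sup>+y. ennreal (mix_dens (change_prob_next (post_changed t \<omega>)) y) * H (\<omega>, y) \<partial>N \<partial>M)"
proof -
  let ?Z = "\<lambda>m. {\<omega> \<in> space M. T \<omega> = m}"
  let ?\<phi> = "\<lambda>m \<omega>. \<integral>\<^sup>+y. ennreal (change_dens p q m (Suc t) y) * H (\<omega>, y) \<partial>N"
  have \<phi>_obs[measurable]: "?\<phi> m \<in> borel_measurable (obs t)" for m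
    by (rule borel_measurable_nn_integral_weighted[OF H change_dens_measurable])
      (simp add: change_dens_integral)
  have [measurable]: "(\<lambda>\<omega>. H (\<omega>, X (Suc t) \<omega>)) \<in> borel_measurable M"
    using measurable_comp[OF measurable_obs_pair_next H] by (simp add: comp_def)
  have [measurable]: "?\<phi> m \<in> borel_measurable M" for m
    using \<phi>_obs by (rule measurable_from_obs)
  have "(\<integral>\<^sup>+\<omega>. H (\<omega>, X (Suc t) \<omega>) \<partial>M) = (\<integral>\<^sup>+\<omega>. (\<Sum>m. indicator (?Z m) \<omega> * H (\<omega>, X (Suc t) \<omega>)) \<partial>M)"
    by (rule nn_integral_cong) (rule suminf_indicator_T[symmetric])
  also have "\<dots> = (\<Sum>m. \<integral>\<^sup>+\<omega>. indicator (?Z m) \<omega> * H (\<omega>, X (Suc t) \<omega>) \<partial>M)"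
    by (rule nn_integral_suminf) measurable
  also have "\<dots> = (\<Sum>m. \<integral>\<^sup>+\<omega>. indicator (?Z m) \<omega> * ?\<phi> m \<omega> \<partial>M)"
    by (intro suminf_cong nn_integral_T_next_obs H)
  also have "\<dots> = (\<Sum>m. \<integral>\<^sup>+\<omega>. ennreal (post t m \<omega>) * ?\<phi> m \<omega> \<partial>M)"
    by (intro suminf_cong nn_integral_T_eq_post[OF law \<phi>_obs])
  also have "\<dots> = (\<integral>\<^sup>+\<omega>. (\<Sum>m. ennreal (post t m \<omega>) * ?\<phi> m \<omega>) \<partial>M)"
    by (rule nn_integral_suminf[symmetric]) measurable
  also have "\<dots> = (\<integral>\<^sup>+\<omega>. \<integral>\<^sup>+y. ennreal (mix_dens (change_prob_next (post_changed t \<omega>)) y) * H (\<omega>, y) \<partial>N \<partial>M)"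
  proof (rule nn_integral_cong_AE)
    show "AE \<omega> in M. (\<Sum>m. ennreal (post t m \<omega>) * ?\<phi> m \<omega>) =
      (\<integral>\<^sup>+y. ennreal (mix_dens (change_prob_next (post_changed t \<omega>)) y) * H (\<omega>, y) \<partial>N)"
      using AE_lik_total_pos[OF law] AE_space
      by eventually_elim (rule suminf_post_nn_integral_change_dens, simp_all add: measurable_Pair2[OF H])
  qed
  finally show ?thesis .
qed

lemma posterior_law_0: "posterior_law 0"
  unfolding posterior_law_def
proof
  fix m
  have post_0: "post 0 m \<omega> = \<theta> * (1 - \<theta>) ^ m" for \<omega>
    by (simp add: post_def lik_def lik_total_def lik_changed_def lik_unchanged_def)
  show "restr_to_subalg (density M (indicator {\<omega> \<in> space M. T \<omega> = m})) (obs 0) =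
    restr_to_subalg (density M (\<lambda>\<omega>. ennreal (post 0 m \<omega>))) (obs 0)"
  proof (rule restr_to_subalg_density_eqI[OF subalgebra_obs sets_obs_eq_cyl obs_cyl_generator])
    fix C assume "C \<in> obs_cyl 0"
    then have C: "C = space M" by (elim obs_cylE) simp
    have "(\<integral>\<^sup>+\<omega>. indicator {\<omega> \<in> space M. T \<omega> = m} \<omega> * indicator C \<omega> \<partial>M) =
      emeasure M {\<omega> \<in> space M. T \<omega> = m \<and> (\<forall>s\<in>{1..0}. X s \<omega> \<in> space N)}"
      unfolding C by (simp add: nn_integral_indicator_Int Int_absorb2)
    also have "\<dots> = ennreal (\<theta> * (1 - \<theta>) ^ m)" using joint_law[where n=0 and A="\<lambda>_. space N"] by simp
    also have "\<dots> = (\<integral>\<^sup>+\<omega>. ennreal (post 0 m \<omega>) * indicator C \<omega> \<partial>M)"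
      unfolding C post_0 by (simp add: nn_integral_cmult_indicator emeasure_space_1)
    finally show "(\<integral>\<^sup>+\<omega>. indicator {\<omega> \<in> space M. T \<omega> = m} \<omega> * indicator C \<omega> \<partial>M) =
      (\<integral>\<^sup>+\<omega>. ennreal (post 0 m \<omega>) * indicator C \<omega> \<partial>M)" .
  qed (simp_all add: emeasure_eq_measure)
qed

lemma nn_integral_change_dens_indicator:
  assumes [measurable]: "A \<in> sets N"
  shows "(\<integral>\<^sup>+y. ennreal (change_dens p q m s y) * (c * indicator A y) \<partial>N) =
    c * emeasure (density N (change_dens p q m s)) A"
  by (simp add: emeasure_density nn_integral_cmult[symmetric] mult_ac)

lemma nn_integral_T_obs_rect:
  assumes law: "posterior_law t" and C[measurable]: "C \<in> sets (obs t)" and A[measurable]: "A \<in> sets N"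
  shows "(\<integral>\<^sup>+\<omega>. indicator {\<omega> \<in> space M. T \<omega> = m} \<omega> * (indicator C \<omega> * indicator A (X (Suc t) \<omega>)) \<partial>M) =
    (\<integral>\<^sup>+\<omega>. ennreal (post t m \<omega>) * (indicator C \<omega> * emeasure (density N (change_dens p q m (Suc t))) A) \<partial>M)"
proof -
  have "(\<integral>\<^sup>+\<omega>. indicator {\<omega> \<in> space M. T \<omega> = m} \<omega> * (indicator C \<omega> * indicator A (X (Suc t) \<omega>)) \<partial>M) =
    (\<integral>\<^sup>+\<omega>. indicator {\<omega> \<in> space M. T \<omega> = m} \<omega> *
      (indicator C \<omega> * emeasure (density N (change_dens p q m (Suc t))) A) \<partial>M)"
    using nn_integral_T_next_obs[where H="\<lambda>(\<omega>, y). indicator C \<omega> * indicator A y"]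
    by (simp add: nn_integral_change_dens_indicator)
  also have "\<dots> = (\<integral>\<^sup>+\<omega>. ennreal (post t m \<omega>) *
      (indicator C \<omega> * emeasure (density N (change_dens p q m (Suc t))) A) \<partial>M)"
    by (rule nn_integral_T_eq_post[OF law]) measurable
  finally show ?thesis .
qed

lemma nn_integral_post_Suc_obs_rect:
  assumes law: "posterior_law t" and C[measurable]: "C \<in> sets (obs t)" and A[measurable]: "A \<in> sets N"
  shows "(\<integral>\<^sup>+\<omega>. ennreal (post (Suc t) m \<omega>) * (indicator C \<omega> * indicator A (X (Suc t) \<omega>)) \<partial>M) =
    (\<integral>\<^sup>+\<omega>. ennreal (post t m \<omega>) * (indicator C \<omega> * emeasure (density N (change_dens p q m (Suc t))) A) \<partial>M)"
proof -
  let ?w = "\<lambda>\<omega>. change_prob_next (post_changed t \<omega>)"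
  define H where "H z = ennreal (post t m (fst z) * (change_dens p q m (Suc t) (snd z) /
    mix_dens (?w (fst z)) (snd z))) * (indicator C (fst z) * indicator A (snd z))" for z
  have [measurable]: "H \<in> borel_measurable (obs t \<Otimes>\<^sub>M N)" unfolding H_def by measurable
  have "(\<integral>\<^sup>+\<omega>. ennreal (post (Suc t) m \<omega>) * (indicator C \<omega> * indicator A (X (Suc t) \<omega>)) \<partial>M) =
    (\<integral>\<^sup>+\<omega>. H (\<omega>, X (Suc t) \<omega>) \<partial>M)"
    by (simp add: H_def post_Suc)
  also have "\<dots> = (\<integral>\<^sup>+\<omega>. \<integral>\<^sup>+y. ennreal (mix_dens (?w \<omega>) y) * H (\<omega>, y) \<partial>N \<partial>M)"
    by (rule nn_integral_next_obs[OF law]) measurable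
  also have "\<dots> = (\<integral>\<^sup>+\<omega>. ennreal (post t m \<omega>) *
      (indicator C \<omega> * emeasure (density N (change_dens p q m (Suc t))) A) \<partial>M)"
  proof (rule nn_integral_cong_AE)
    show "AE \<omega> in M. (\<integral>\<^sup>+y. ennreal (mix_dens (?w \<omega>) y) * H (\<omega>, y) \<partial>N) =
      ennreal (post t m \<omega>) * (indicator C \<omega> * emeasure (density N (change_dens p q m (Suc t))) A)"
      using AE_lik_total_pos[OF law]
    proof eventually_elim
      case (elim \<omega>)
      have w: "0 < ?w \<omega>" "?w \<omega> \<le> 1" using theta change_prob_next_bounds[of "post_changed t \<omega>"] by simp_all
      have "(\<integral>\<^sup>+y. ennreal (mix_dens (?w \<omega>) y) * H (\<omega>, y) \<partial>N) =
        (\<integral>\<^sup>+y. ennreal (change_dens p q m (Suc t) y) * (ennreal (post t m \<omega>) * indicator C \<omega> * indicator A y) \<partial>N)"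
        unfolding H_def using ennreal_mix_dens_mult_divide[OF w post_nonneg]
        by (intro nn_integral_cong) (simp add: mult.assoc[symmetric])
      also have "\<dots> = ennreal (post t m \<omega>) * indicator C \<omega> * emeasure (density N (change_dens p q m (Suc t))) A"
        by (rule nn_integral_change_dens_indicator[OF A])
      finally show ?case by (simp add: mult_ac)
    qed
  qed
  finally show ?thesis .
qed

lemma posterior_law_Suc:
  assumes law: "posterior_law t"
  shows "posterior_law (Suc t)"
  unfolding posterior_law_def
proof
  fix m
  show "restr_to_subalg (density M (indicator {\<omega> \<in> space M. T \<omega> = m})) (obs (Suc t)) =
    restr_to_subalg (density M (\<lambda>\<omega>. ennreal (post (Suc t) m \<omega>))) (obs (Suc t))"
  proof (rule restr_to_subalg_density_eqI[OF subalgebra_obs sets_obs_Suc_eq_rect obs_rect_generator])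
    fix R assume "R \<in> obs_rect t"
    then obtain C A where C: "C \<in> sets (obs t)" and A: "A \<in> sets N"
      and R: "R = C \<inter> (X (Suc t) -` A \<inter> space M)" by (rule obs_rectE)
    have "indicator R \<omega> = (indicator C \<omega> * indicator A (X (Suc t) \<omega>) :: ennreal)" if "\<omega> \<in> space M" for \<omega>
      using that by (simp add: R indicator_def)
    then show "(\<integral>\<^sup>+\<omega>. indicator {\<omega> \<in> space M. T \<omega> = m} \<omega> * indicator R \<omega> \<partial>M) =
      (\<integral>\<^sup>+\<omega>. ennreal (post (Suc t) m \<omega>) * indicator R \<omega> \<partial>M)"
      by (simp cong: nn_integral_cong add: nn_integral_T_obs_rect[OF law C A]
        nn_integral_post_Suc_obs_rect[OF law C A])
  qed (simp_all add: emeasure_eq_measure)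
qed

lemma posterior_law: "posterior_law t"
  by (induction t) (auto intro: posterior_law_0 posterior_law_Suc)

subsection \<open>The posterior process is a Markov chain\<close>

abbreviation V :: "nat \<Rightarrow> 'a \<Rightarrow> real" where
  "V \<equiv> posterior M N T X"

lemma posterior_eq_cond_exp: "V t = real_cond_exp M (obs t) (\<lambda>\<omega>. if T \<omega> < t then 1 else 0)"
  unfolding posterior_def obs_def ..

lemma posterior_measurable[measurable]: "V t \<in> borel_measurable (obs t)"
proof -
  interpret sigma_finite_subalgebra M "obs t" by (rule sigma_finite_subalgebra_obs)
  show ?thesis unfolding posterior_eq_cond_exp by (rule borel_measurable_cond_exp)
qed

lemma AE_posterior_eq_post_changed: "AE \<omega> in M. V t \<omega> = post_changed t \<omega>"
  unfolding posterior_eq_cond_exp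
proof (rule real_cond_exp_charact_nonneg[OF sigma_finite_subalgebra_obs])
  show "integrable M (\<lambda>\<omega>. if T \<omega> < t then 1 else 0 :: real)"
    by (rule integrable_const_bound[where B=1]) simp_all
  show "integrable M (post_changed t)"
    using post_changed_bounds[of t] measurable_from_obs[OF post_changed_measurable]
    by (intro integrable_const_bound[where B=1]) simp_all
  show "post_changed t \<omega> \<ge> 0" for \<omega> by (rule post_changed_bounds)
  fix A assume A: "A \<in> sets (obs t)"
  then have [measurable]: "A \<in> sets M" using sets_obs_subset by blast
  have "(\<integral>\<^sup>+\<omega>. ennreal (indicator A \<omega> * (if T \<omega> < t then 1 else 0)) \<partial>M) =
    (\<integral>\<^sup>+\<omega>. (\<Sum>m<t. indicator {\<omega> \<in> space M. T \<omega> = m} \<omega> * indicator A \<omega>) \<partial>M)"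
    by (intro nn_integral_cong) (simp add: indicator_def sum.delta')
  also have "\<dots> = (\<Sum>m<t. \<integral>\<^sup>+\<omega>. indicator {\<omega> \<in> space M. T \<omega> = m} \<omega> * indicator A \<omega> \<partial>M)"
    by (rule nn_integral_sum) simp
  also have "\<dots> = (\<Sum>m<t. \<integral>\<^sup>+\<omega>. ennreal (post t m \<omega>) * indicator A \<omega> \<partial>M)"
    using A by (intro sum.cong refl nn_integral_T_eq_post[OF posterior_law]) simp
  also have "\<dots> = (\<integral>\<^sup>+\<omega>. (\<Sum>m<t. ennreal (post t m \<omega>) * indicator A \<omega>) \<partial>M)"
    by (rule nn_integral_sum[symmetric]) simp
  also have "\<dots> = (\<integral>\<^sup>+\<omega>. ennreal (indicator A \<omega> * post_changed t \<omega>) \<partial>M)"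
    by (intro nn_integral_cong)
      (simp add: sum_distrib_right[symmetric] post_changed_eq_sum sum_ennreal post_nonneg indicator_def)
  finally show "(\<integral>\<^sup>+\<omega>. ennreal (indicator A \<omega> * (if T \<omega> < t then 1 else 0)) \<partial>M) =
    (\<integral>\<^sup>+\<omega>. ennreal (indicator A \<omega> * post_changed t \<omega>) \<partial>M)" .
qed simp_all

lemma AE_posterior_bounds: "AE \<omega> in M. V t \<omega> \<in> {0..1}"
  using AE_posterior_eq_post_changed[of t] by eventually_elim (simp add: post_changed_bounds)

definition proc_gen :: "nat \<Rightarrow> 'a set set" where
  "proc_gen t = {V s -` B \<inter> space M | s B. s \<le> t \<and> B \<in> sets borel}"

lemma proc_gen_Pow: "proc_gen t \<subseteq> Pow (space M)"
  unfolding proc_gen_def by auto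

lemma space_proc_sigma[simp]: "space (proc_sigma M V t) = space M"
  unfolding proc_sigma_def proc_gen_def[symmetric] by (simp add: space_measure_of_conv)

lemma sets_proc_sigma: "sets (proc_sigma M V t) = sigma_sets (space M) (proc_gen t)"
  unfolding proc_sigma_def proc_gen_def[symmetric] using proc_gen_Pow by (simp add: sets_measure_of)

lemma sets_proc_sigma_subset: "sets (proc_sigma M V t) \<subseteq> sets (obs t)"
proof -
  have "proc_gen t \<subseteq> sets (obs t)"
  proof
    fix C assume "C \<in> proc_gen t"
    then obtain s B where sB: "s \<le> t" "B \<in> sets borel" "C = V s -` B \<inter> space M"
      unfolding proc_gen_def by blast
    have "V s -` B \<inter> space (obs s) \<in> sets (obs s)" by (rule measurable_sets[OF posterior_measurable sB(2)])
    then show "C \<in> sets (obs t)" using sB sets_obs_mono[OF sB(1)] by auto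
  qed
  then show ?thesis
    unfolding sets_proc_sigma using sets.sigma_sets_subset[of "proc_gen t" "obs t"] by simp
qed

lemma sigma_finite_subalgebra_proc_sigma: "sigma_finite_subalgebra M (proc_sigma M V t)"
proof (rule finite_measure_subalgebra_is_sigma_finite)
  have "subalgebra M (proc_sigma M V t)"
    using sets_proc_sigma_subset sets_obs_subset unfolding subalgebra_def by auto
  then show "finite_measure_subalgebra M (proc_sigma M V t)"
    by (simp add: finite_measure_subalgebra_def finite_measure_subalgebra_axioms_def finite_measure_axioms)
qed

lemma posterior_measurable_proc_sigma: "V t \<in> borel_measurable (proc_sigma M V t)"
proof (rule measurableI)
  fix B :: "real set" assume "B \<in> sets borel"
  then have "V t -` B \<inter> space M \<in> proc_gen t" unfolding proc_gen_def by blast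
  then show "V t -` B \<inter> space (proc_sigma M V t) \<in> sets (proc_sigma M V t)"
    unfolding sets_proc_sigma by auto
qed simp

lemma nn_integral_posterior_Suc:
  assumes A[measurable]: "A \<in> sets (obs t)" and B[measurable]: "B \<in> sets borel"
  shows "(\<integral>\<^sup>+\<omega>. ennreal (indicator A \<omega> * indicator B (V (Suc t) \<omega>)) \<partial>M) =
    (\<integral>\<^sup>+\<omega>. ennreal (indicator A \<omega> * measure (trans_kernel (V t \<omega>)) B) \<partial>M)"
proof -
  define H :: "'a \<times> 'b \<Rightarrow> ennreal"
    where "H z = indicator A (fst z) * indicator B (bayes_update (change_prob_next (V t (fst z))) (snd z))" for z
  have [measurable]: "H \<in> borel_measurable (obs t \<Otimes>\<^sub>M N)" unfolding H_def by measurable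
  have AE_post: "AE \<omega> in M. 0 < lik_total t \<omega> \<and> V t \<omega> = post_changed t \<omega> \<and>
    V (Suc t) \<omega> = post_changed (Suc t) \<omega>"
    using AE_lik_total_pos[OF posterior_law] AE_posterior_eq_post_changed[of t]
      AE_posterior_eq_post_changed[of "Suc t"]
    by eventually_elim simp
  have "(\<integral>\<^sup>+\<omega>. ennreal (indicator A \<omega> * indicator B (V (Suc t) \<omega>)) \<partial>M) = (\<integral>\<^sup>+\<omega>. H (\<omega>, X (Suc t) \<omega>) \<partial>M)"
  proof (rule nn_integral_cong_AE)
    show "AE \<omega> in M. ennreal (indicator A \<omega> * indicator B (V (Suc t) \<omega>)) = H (\<omega>, X (Suc t) \<omega>)"
      using AE_post by eventually_elim (simp add: H_def post_changed_Suc indicator_def)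
  qed
  also have "\<dots> = (\<integral>\<^sup>+\<omega>. \<integral>\<^sup>+y. ennreal (mix_dens (change_prob_next (post_changed t \<omega>)) y) * H (\<omega>, y) \<partial>N \<partial>M)"
    by (rule nn_integral_next_obs[OF posterior_law]) simp
  also have "\<dots> = (\<integral>\<^sup>+\<omega>. ennreal (indicator A \<omega> * measure (trans_kernel (V t \<omega>)) B) \<partial>M)"
  proof (rule nn_integral_cong_AE)
    show "AE \<omega> in M. (\<integral>\<^sup>+y. ennreal (mix_dens (change_prob_next (post_changed t \<omega>)) y) * H (\<omega>, y) \<partial>N) =
      ennreal (indicator A \<omega> * measure (trans_kernel (V t \<omega>)) B)"
      using AE_post
    proof eventually_elim
      case (elim \<omega>)
      interpret K: prob_space "trans_kernel (V t \<omega>)" by (rule prob_space_trans_kernel)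
      have "(\<integral>\<^sup>+y. ennreal (mix_dens (change_prob_next (post_changed t \<omega>)) y) * H (\<omega>, y) \<partial>N) =
        (\<integral>\<^sup>+y. indicator A \<omega> * (ennreal (mix_dens (change_prob_next (V t \<omega>)) y) *
          indicator B (bayes_update (change_prob_next (V t \<omega>)) y)) \<partial>N)"
        using elim by (intro nn_integral_cong) (simp add: H_def mult_ac)
      also have "\<dots> = indicator A \<omega> * emeasure (trans_kernel (V t \<omega>)) B"
        unfolding emeasure_trans_kernel[OF B] by (rule nn_integral_cmult) simp
      finally show ?case by (simp add: K.emeasure_eq_measure indicator_def)
    qed
  qed
  finally show ?thesis .
qed

lemma posterior_markov:
  assumes [measurable]: "B \<in> sets borel"
  shows "AE \<omega> in M. real_cond_exp M (proc_sigma M V t) (\<lambda>\<omega>. indicator B (V (Suc t) \<omega>)) \<omega> =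
    measure (trans_kernel (V t \<omega>)) B"
proof (rule real_cond_exp_charact_nonneg[OF sigma_finite_subalgebra_proc_sigma])
  have [measurable]: "V s \<in> borel_measurable M" for s
    by (rule measurable_from_obs[OF posterior_measurable])
  have kernel_B: "(\<lambda>z. measure (trans_kernel z) B) \<in> borel_measurable borel"
    by (rule measurable_compose[OF trans_kernel_measurable measurable_measure_prob_algebra]) simp
  show g: "(\<lambda>\<omega>. measure (trans_kernel (V t \<omega>)) B) \<in> borel_measurable (proc_sigma M V t)"
    by (rule measurable_compose[OF posterior_measurable_proc_sigma kernel_B])
  have [measurable]: "(\<lambda>\<omega>. measure (trans_kernel (V t \<omega>)) B) \<in> borel_measurable M"
    by (rule measurable_from_subalg[OF sigma_finite_subalgebra.subalg[OF sigma_finite_subalgebra_proc_sigma] g])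
  have kernel_bounds: "0 \<le> measure (trans_kernel z) B" "measure (trans_kernel z) B \<le> 1" for z
    using prob_space.prob_le_1[OF prob_space_trans_kernel] by (simp_all add: measure_nonneg)
  show f: "(\<lambda>\<omega>. indicator B (V (Suc t) \<omega>) :: real) \<in> borel_measurable M" by measurable
  show "integrable M (\<lambda>\<omega>. indicator B (V (Suc t) \<omega>) :: real)"
    by (intro integrable_const_bound[where B=1]) (simp_all add: f)
  show "integrable M (\<lambda>\<omega>. measure (trans_kernel (V t \<omega>)) B)"
    using kernel_bounds by (intro integrable_const_bound[where B=1]) simp_all
  show "0 \<le> measure (trans_kernel (V t \<omega>)) B" for \<omega> by (rule kernel_bounds)
  fix A assume "A \<in> sets (proc_sigma M V t)"
  then have "A \<in> sets (obs t)" using sets_proc_sigma_subset by blast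
  then show "(\<integral>\<^sup>+\<omega>. ennreal (indicator A \<omega> * indicator B (V (Suc t) \<omega>)) \<partial>M) =
    (\<integral>\<^sup>+\<omega>. ennreal (indicator A \<omega> * measure (trans_kernel (V t \<omega>)) B) \<partial>M)"
    by (rule nn_integral_posterior_Suc) simp
qed simp_all

subsection \<open>Stochastic monotonicity of the kernel\<close>

lemma bayes_update_mono:
  assumes w: "0 < w" "w \<le> w'" "w' \<le> 1"
  shows "bayes_update w y \<le> bayes_update w' y"
proof (cases "mix_dens w y = 0")
  case True
  then show ?thesis using bayes_update_bounds[of w' y] w by (simp add: bayes_update_def)
next
  case False
  have q: "0 < q y"
  proof (rule ccontr)
    assume "\<not> 0 < q y"
    then have "q y = 0" "p y = 0" using same_support[of y] p_nonneg[of y] q_nonneg[of y] by auto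
    then show False using False by (simp add: mix_dens_def)
  qed
  have pos: "0 < mix_dens w y" "0 < mix_dens w' y"
    using False mix_dens_nonneg[of w y] mix_dens_nonneg[of w' y] q p_nonneg[of y] w
    by (auto simp: mix_dens_def intro!: add_pos_nonneg)
  have "w' * q y * mix_dens w y - w * q y * mix_dens w' y = (w' - w) * (q y * p y)"
    by (simp add: mix_dens_def algebra_simps)
  moreover have "0 \<le> (w' - w) * (q y * p y)" using w p_nonneg[of y] q_nonneg[of y] by simp
  ultimately have "w * q y * mix_dens w' y \<le> w' * q y * mix_dens w y" by linarith
  then have "w * q y * mix_dens w' y / (mix_dens w y * mix_dens w' y) \<le>
    w' * q y * mix_dens w y / (mix_dens w y * mix_dens w' y)"
    using pos by (intro divide_right_mono) simp_all
  then show ?thesis using pos by (simp add: bayes_update_def)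
qed

lemma prob_space_density_p: "prob_space (density N p)"
  by (rule prob_spaceI) (simp add: emeasure_density_space p_integral)

lemma prob_space_density_q: "prob_space (density N q)"
  by (rule prob_spaceI) (simp add: emeasure_density_space q_integral)

lemma bayes_update_threshold:
  assumes w: "0 < w" "w \<le> 1" and "0 < c"
  shows "c \<le> bayes_update w y \<Longrightarrow> c * (1 - w) * p y \<le> (1 - c) * w * q y"
    and "bayes_update w y < c \<Longrightarrow> (1 - c) * w * q y \<le> c * (1 - w) * p y"
proof -
  assume "c \<le> bayes_update w y"
  then have "c \<le> w * q y / mix_dens w y" by (simp add: bayes_update_def)
  moreover from this have "0 < mix_dens w y"
    using \<open>0 < c\<close> mix_dens_nonneg[of w y] w by (cases "mix_dens w y = 0") auto
  ultimately have "c * mix_dens w y \<le> w * q y" by (simp add: le_divide_eq)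
  then show "c * (1 - w) * p y \<le> (1 - c) * w * q y" by (simp add: mix_dens_def algebra_simps)
next
  assume lt: "bayes_update w y < c"
  show "(1 - c) * w * q y \<le> c * (1 - w) * p y"
  proof (cases "mix_dens w y = 0")
    case True
    then show ?thesis using mix_dens_eq_0[OF w True] by simp
  next
    case False
    then have "w * q y < c * mix_dens w y"
      using lt mix_dens_nonneg[of w y] w by (simp add: bayes_update_def divide_less_eq)
    then show ?thesis by (simp add: mix_dens_def algebra_simps)
  qed
qed

text \<open>Superlevel sets of \<open>bayes_update w\<close> are likelihood-ratio tests of \<open>q\<close> against \<open>p\<close>, so the
  Neyman--Pearson inequality applies.\<close>

lemma measure_superlevel_le:
  assumes w: "0 < w" "w \<le> 1"
  shows "measure (density N p) {y \<in> space N. c \<le> bayes_update w y} \<le>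
    measure (density N q) {y \<in> space N. c \<le> bayes_update w y}"
    (is "measure ?P ?S \<le> measure ?Q ?S")
proof -
  interpret P: prob_space ?P by (rule prob_space_density_p)
  interpret Q: prob_space ?Q by (rule prob_space_density_q)
  have bounds: "0 \<le> bayes_update w y" "bayes_update w y \<le> 1" for y
    using bayes_update_bounds[of w y] w by simp_all
  consider "c \<le> 0" | "1 < c" | "0 < c" "c \<le> 1" "w = 1" | "0 < c" "c \<le> 1" "w < 1"
    using w by linarith
  then show ?thesis
  proof cases
    case 1
    then have "?S = space N" using bounds by (auto intro: order_trans)
    then show ?thesis using P.prob_space Q.prob_space by simp
  next
    case 2
    then have "?S = {}" using bounds by (auto simp: not_le intro: le_less_trans)
    then show ?thesis by (simp only: measure_empty order_refl)
  next
    case 3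
    then have S: "?S = {y \<in> space N. 0 < q y}"
      using q_nonneg by (auto simp: bayes_update_def mix_dens_def less_le)
    have "emeasure ?Q (space N - ?S) = (\<integral>\<^sup>+y. ennreal (q y) * indicator (space N - ?S) y \<partial>N)"
      by (rule emeasure_density) simp_all
    also have "\<dots> = 0" unfolding S using q_nonneg
      by (intro nn_integral_zero') (auto simp: indicator_def less_le intro!: AE_I2)
    finally have "Q.prob ?S = 1"
      using Q.prob_compl[of ?S] by (simp add: Q.emeasure_eq_measure)
    then show ?thesis by simp
  next
    case 4
    show ?thesis
      using bayes_update_threshold[OF w \<open>0 < c\<close>] 4 w prob_space_density_p prob_space_density_q
      by (intro likelihood_ratio_set_measure_le[where a="c * (1 - w)" and b="(1 - c) * w"])
        (auto simp: not_le)
  qed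
qed

lemma measure_trans_kernel_atLeast:
  fixes z c :: real
  defines "w \<equiv> change_prob_next z"
  defines "S \<equiv> {y \<in> space N. c \<le> bayes_update w y}"
  shows "measure (trans_kernel z) {c..} = w * measure (density N q) S + (1 - w) * measure (density N p) S"
proof -
  interpret P: prob_space "density N p" by (rule prob_space_density_p)
  interpret Q: prob_space "density N q" by (rule prob_space_density_q)
  have w: "0 \<le> w" "w \<le> 1" using change_prob_next_bounds[of z] theta by (simp_all add: w_def)
  have "emeasure (trans_kernel z) {c..} =
    (\<integral>\<^sup>+y. ennreal w * (ennreal (q y) * indicator S y) + ennreal (1 - w) * (ennreal (p y) * indicator S y) \<partial>N)"
    unfolding emeasure_trans_kernel[OF atLeast_borel] w_def[symmetric] using w p_nonneg q_nonneg
    by (intro nn_integral_cong) (simp add: S_def mix_dens_def indicator_def ennreal_mult distrib_right)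
  also have "\<dots> = ennreal w * emeasure (density N q) S + ennreal (1 - w) * emeasure (density N p) S"
    by (simp add: S_def nn_integral_add nn_integral_cmult emeasure_density)
  also have "\<dots> = ennreal (w * measure (density N q) S + (1 - w) * measure (density N p) S)"
    using w by (simp add: P.emeasure_eq_measure Q.emeasure_eq_measure ennreal_mult ennreal_plus)
  finally have e: "emeasure (trans_kernel z) {c..} =
    ennreal (w * measure (density N q) S + (1 - w) * measure (density N p) S)" .
  show ?thesis
    unfolding measure_def[of "trans_kernel z"] e using w by (intro enn2real_ennreal) simp
qed

lemma trans_kernel_stoch_mono:
  assumes "z \<le> z'"
  shows "stoch_le (trans_kernel z) (trans_kernel z')"
  unfolding stoch_le_def
proof
  fix c :: real
  let ?P = "density N p" and ?Q = "density N q"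
  interpret P: prob_space ?P by (rule prob_space_density_p)
  interpret Q: prob_space ?Q by (rule prob_space_density_q)
  define w w' where "w = change_prob_next z" and "w' = change_prob_next z'"
  have "\<theta> \<le> w" "w \<le> w'" "w' \<le> 1"
    using change_prob_next_bounds change_prob_next_mono[OF assms] by (simp_all add: w_def w'_def)
  then have w: "0 < w" "w \<le> w'" "w' \<le> 1" using theta by simp_all
  define S S' where "S = {y \<in> space N. c \<le> bayes_update w y}" and "S' = {y \<in> space N. c \<le> bayes_update w' y}"
  have "S \<subseteq> S'" using bayes_update_mono[OF w] by (auto simp: S_def S'_def intro: order_trans)
  then have mono: "measure ?Q S \<le> measure ?Q S'" "measure ?P S \<le> measure ?P S'"
    by (simp_all add: S_def S'_def P.finite_measure_mono Q.finite_measure_mono)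
  have "measure (trans_kernel z) {c..} = w * measure ?Q S + (1 - w) * measure ?P S"
    unfolding w_def S_def by (rule measure_trans_kernel_atLeast)
  also have "\<dots> \<le> w * measure ?Q S' + (1 - w) * measure ?P S'"
    using mono w by (intro add_mono mult_left_mono) simp_all
  also have "\<dots> \<le> w' * measure ?Q S' + (1 - w') * measure ?P S'"
  proof -
    have "measure ?P S' \<le> measure ?Q S'"
      unfolding S'_def using w by (intro measure_superlevel_le) simp_all
    then have "0 \<le> (w' - w) * (measure ?Q S' - measure ?P S')" using w by simp
    then show ?thesis by (simp add: algebra_simps)
  qed
  also have "\<dots> = measure (trans_kernel z') {c..}"
    unfolding w'_def S'_def by (rule measure_trans_kernel_atLeast[symmetric])
  finally show "measure (trans_kernel z) {c..} \<le> measure (trans_kernel z') {c..}" .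
qed

end

theorem mainTheorem19:
  fixes M :: "'a measure" and N :: "'b measure"
    and K :: nat and \<theta> :: real and p q :: "'b \<Rightarrow> real"
    and tau :: "nat \<Rightarrow> 'a \<Rightarrow> nat" and X :: "nat \<Rightarrow> nat \<Rightarrow> 'a \<Rightarrow> 'b"
  assumes "prob_space M"
    and "K \<ge> 1"
    and "0 < \<theta>" and "\<theta> < 1"
    and "p \<in> borel_measurable N" and "q \<in> borel_measurable N"
    and "\<And>y. p y \<ge> 0" and "\<And>y. q y \<ge> 0"
    and "(\<integral>\<^sup>+ y. ennreal (p y) \<partial>N) = 1" and "(\<integral>\<^sup>+ y. ennreal (q y) \<partial>N) = 1"
    and "\<And>y. p y > 0 \<longleftrightarrow> q y > 0"
    and "\<And>k. tau k \<in> measurable M (count_space UNIV)"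
    and "\<And>k t. X k t \<in> measurable M N"
    and "\<And>n (m :: nat \<Rightarrow> nat) (A :: nat \<Rightarrow> nat \<Rightarrow> 'b set).
           (\<And>k t. A k t \<in> sets N) \<Longrightarrow>
           emeasure M {\<omega> \<in> space M. (\<forall>k\<in>{1..K}. tau k \<omega> = m k) \<and>
                                     (\<forall>k\<in>{1..K}. \<forall>t\<in>{1..n}. X k t \<omega> \<in> A k t)}
           = (\<Prod>k\<in>{1..K}. ennreal (\<theta> * (1 - \<theta>) ^ m k)) *
             (\<Prod>k\<in>{1..K}. \<Prod>t\<in>{1..n}.
                 \<integral>\<^sup>+ y \<in> A k t. ennreal (if t \<le> m k then p y else q y) \<partial>N)"
  defines "V \<equiv> (\<lambda>t. posterior M N (tau 1) (X 1) t)"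
  shows "(\<forall>t. AE \<omega> in M. V t \<omega> \<in> {0..1}) \<and>
         (\<exists>Ker :: real \<Rightarrow> real measure.
            Ker \<in> measurable borel (prob_algebra borel) \<and>
            (\<forall>x\<in>{0..1}. emeasure (Ker x) {0..1} = 1) \<and>
            (\<forall>t (B :: real set). B \<in> sets borel \<longrightarrow>
               (AE \<omega> in M. real_cond_exp M (proc_sigma M V t)
                              (\<lambda>\<omega>'. indicator B (V (Suc t) \<omega>')) \<omega>
                            = measure (Ker (V t \<omega>)) B)) \<and>
            (\<forall>x x'. 0 \<le> x \<and> x \<le> x' \<and> x' \<le> 1 \<longrightarrow> stoch_le (Ker x) (Ker x')))"
proof -
  interpret streams: change_streams M N K \<theta> p q tau X
    by (rule change_streams.intro) (fact assms)+
  have "1 \<in> {1..K}" using \<open>K \<ge> 1\<close> by simp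
  interpret change_stream M N \<theta> p q "tau 1" "X 1"
    by (intro change_stream.intro change_stream_axioms.intro)
      (fact assms streams.emeasure_stream_marginal[OF \<open>1 \<in> {1..K}\<close>])+
  show ?thesis
    unfolding V_def
  proof (intro conjI allI impI exI[of _ trans_kernel] ballI)
    show "AE \<omega> in M. posterior M N (tau 1) (X 1) t \<omega> \<in> {0..1}" for t
      by (rule AE_posterior_bounds)
    show "trans_kernel \<in> borel \<rightarrow>\<^sub>M prob_algebra borel" by (rule trans_kernel_measurable)
    show "emeasure (trans_kernel x) {0..1} = 1" for x by (rule trans_kernel_unit_interval)
    show "AE \<omega> in M. real_cond_exp M (proc_sigma M (posterior M N (tau 1) (X 1)) t)
        (\<lambda>\<omega>'. indicator B (posterior M N (tau 1) (X 1) (Suc t) \<omega>')) \<omega> =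
      measure (trans_kernel (posterior M N (tau 1) (X 1) t \<omega>)) B" if "B \<in> sets borel" for t B
      using that by (rule posterior_markov)
    show "stoch_le (trans_kernel x) (trans_kernel x')" if "0 \<le> x \<and> x \<le> x' \<and> x' \<le> 1" for x x'
      using that by (intro trans_kernel_stoch_mono) simp
  qed
qed

end
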